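(* Let $A \in \mathcal{M}_d$ (a complex $d\times d$ matrix) and let $\sigma_1 \ge \dots \ge \sigma_d \ge 0$ denote the singular values of $A$ (counted with multiplicity). If $A \overline{A}$ is Hermitian (where $\overline{A}$ is the entrywise complex conjugate of $A$), then there exist a permutation $\tau$ of $\{1, \dots, d\}$, an even integer $r \le d$ and a function $\rho: \{1,\dots,r/2\} \to \{0, 1\}$ such that \[ \operatorname{tr}\left[A \overline{A}\right] = 2 \sum_{i=1}^{r/2} (-1)^{\rho(i)} \, \sigma_{\tau(2i-1)} \, \sigma_{\tau(2i)} + \sum_{i=r+1}^d \sigma_{\tau(i)}^2 . \] Conversely, given any permutation $\tau$ of $\{1,\dots,d\}$, any even integer $r \le d$, any function $\rho: \{1,\dots,r/2\} \to \{0,1\}$, and any nonnegative numbers $\sigma_1 \ge \dots \ge \sigma_d$, there exists an $A \in \mathcal{M}_d$ whose singular values are $\sigma_1,\dots,\sigma_d$ and such that $\operatorname{tr}[A\overline{A}] = 2 \sum_{i=1}^{r/2} (-1)^{\rho(i)} \sigma_{\tau(2i-1)} \sigma_{\tau(2i)} + \sum_{i=r+1}^d \sigma_{\tau(i)}^2$.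
   Context: $\mathcal{M}_d$ denotes the complex $d\times d$ matrices; $\overline{A}$ is the entrywise complex conjugate; singular values $\sigma_i(A)$ are ordered decreasingly. This result is used to minimize $\operatorname{tr}[A\overline{A}]$ over matrices with fixed singular values, which determines the tightest constant for separation witnesses of the form $(\mathbb{1}\otimes B)\mathbb{F}(\mathbb{1}\otimes B^\dagger)+w(B)\mathbb{1}$ with $\mathbb{F}$ the flip operator. *)

theory Defs
  imports "Jordan_Normal_Form.Schur_Decomposition" "HOL-Combinatorics.Permutations"
begin

definition mat_conj :: "complex mat \<Rightarrow> complex mat" where
  "mat_conj A = map_mat cnj A"

definition mat_trace :: "complex mat \<Rightarrow> complex" where
  "mat_trace M = (\<Sum>i<dim_row M. M $$ (i, i))"

definition hermitian_mat :: "complex mat \<Rightarrow> bool" where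
  "hermitian_mat M \<longleftrightarrow> dim_row M = dim_col M \<and> mat_adjoint M = M"

text \<open>\<open>sv_of A d \<sigma>\<close>: for \<open>A\<close> a complex \<open>d\<times>d\<close> matrix, \<open>\<sigma> 0 \<ge> \<sigma> 1 \<ge> \<dots> \<ge> \<sigma> (d-1) \<ge> 0\<close>
  are the singular values of \<open>A\<close> counted with multiplicity, i.e. the
  \<open>\<sigma> i ^ 2\<close> are the eigenvalues of \<open>A\<^sup>* A\<close> with algebraic multiplicity.\<close>
definition sv_of :: "complex mat \<Rightarrow> nat \<Rightarrow> (nat \<Rightarrow> real) \<Rightarrow> bool" where
  "sv_of A d \<sigma> \<longleftrightarrow> A \<in> carrier_mat d d
     \<and> (\<forall>i<d. 0 \<le> \<sigma> i) \<and> (\<forall>i j. i \<le> j \<longrightarrow> j < d \<longrightarrow> \<sigma> j \<le> \<sigma> i)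
     \<and> char_poly (mat_adjoint A * A) = (\<Prod>i<d. [:- complex_of_real ((\<sigma> i)\<^sup>2), 1:])"

definition trace_formula :: "nat \<Rightarrow> (nat \<Rightarrow> real) \<Rightarrow> (nat \<Rightarrow> nat) \<Rightarrow> nat \<Rightarrow> (nat \<Rightarrow> nat) \<Rightarrow> real" where
  "trace_formula d \<sigma> \<tau> r \<rho> =
     2 * (\<Sum>i<r div 2. (-1) ^ (\<rho> i) * \<sigma> (\<tau> (2*i)) * \<sigma> (\<tau> (2*i+1)))
     + (\<Sum>i\<in>{r..<d}. (\<sigma> (\<tau> i))\<^sup>2)"

end

theory Submission
  imports Defs
begin

text \<open>Write \<open>A\<^sup>c\<close> for the entrywise conjugate and let \<open>M = A A\<^sup>c\<close> be Hermitian. Then also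
  \<open>A\<^sup>c A = M\<^sup>c\<close>, so after the unitary change \<open>B = U\<^sup>* A U\<^sup>c\<close> diagonalising \<open>M\<close> we have
  \<open>B B\<^sup>c = B\<^sup>c B = D\<close> real diagonal; hence \<open>D B = B D\<close> and \<open>B\<close> is block diagonal along
  the eigenvalues of \<open>M\<close>, with the singular values of \<open>A\<close> distributed over the blocks.
  A block \<open>C\<close> of size \<open>k\<close> for the eigenvalue \<open>\<lambda>\<close> satisfies \<open>C C\<^sup>c = \<lambda> I\<close>.
  If \<open>\<lambda> \<noteq> 0\<close>, then \<open>C\<^sup>c = \<lambda> C\<^sup>-\<^sup>1\<close>, so the singular values of \<open>C\<close> are invariant under
  \<open>s \<mapsto> |\<lambda>|/s\<close> and pair up into products \<open>|\<lambda>|\<close>, taken with the sign of \<open>\<lambda>\<close>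
  (\<open>|det C|\<^sup>2 = \<lambda>\<^sup>k\<close> makes \<open>k\<close> even when \<open>\<lambda> < 0\<close>); if \<open>\<lambda> = 0\<close>, at most half of them
  are nonzero and each is paired with a zero. Either way the pairing accounts for
  \<open>tr (C C\<^sup>c) = k \<lambda>\<close>, and summing over the blocks gives the trace formula.
  Conversely, a signed permutation matrix swapping the columns \<open>2i, 2i+1\<close> (\<open>2i < r\<close>),
  scaled by the singular values, realises any prescribed pairing.\<close>

lemma sum_lessThan_add_split: "(\<Sum>l<r + (z :: nat). f l) = (\<Sum>l<r. f l) + (\<Sum>l<z. f (r + l))"
  by (induction z) (auto simp: add.assoc)

lemma sum_lessThan_double: "(\<Sum>i<2 * (m :: nat). f i) = (\<Sum>p<m. f (2 * p) + f (2 * p + 1))"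
  by (induction m) (auto simp: add.assoc)

lemma sum_eq_single:
  assumes "finite S" "a \<in> S" "\<And>i. i \<in> S \<Longrightarrow> i \<noteq> a \<Longrightarrow> g i = 0"
  shows "sum g S = g a"
  using assms by (simp add: sum.remove sum.neutral)

lemma prod_list_map_upt: "(\<Prod>x\<leftarrow>map g [0..<d]. f x) = (\<Prod>i<d. f (g i))"
  by (simp add: prod.distinct_set_conv_list[symmetric] atLeast0LessThan comp_def)

lemma index_mult_mat_sum:
  "i < dim_row A \<Longrightarrow> j < dim_col B \<Longrightarrow> dim_col A = dim_row B \<Longrightarrow>
   (A * B) $$ (i, j) = (\<Sum>l<dim_col A. A $$ (i, l) * B $$ (l, j))"
  by (auto simp: scalar_prod_def atLeast0LessThan intro!: sum.cong)

lemmas mult_mat_simps = index_mult_mat_sum index_mult_mat(2,3)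
declare index_mult_mat(1)[simp del]

lemma mat_adjoint_alt:
  "mat_adjoint (A :: complex mat) = mat (dim_col A) (dim_row A) (\<lambda>(i, j). cnj (A $$ (j, i)))"
  unfolding mat_adjoint_def mat_of_rows_def by (rule eq_matI) auto

lemma mat_adjoint_carrier [simp]:
  "(A :: complex mat) \<in> carrier_mat n m \<Longrightarrow> mat_adjoint A \<in> carrier_mat m n"
  by (auto simp: mat_adjoint_alt)

lemma dim_mat_adjoint [simp]:
  "dim_row (mat_adjoint (A :: complex mat)) = dim_col A"
  "dim_col (mat_adjoint (A :: complex mat)) = dim_row A"
  by (auto simp: mat_adjoint_alt)

lemma index_mat_adjoint [simp]:
  "i < dim_col A \<Longrightarrow> j < dim_row A \<Longrightarrow> mat_adjoint (A :: complex mat) $$ (i, j) = cnj (A $$ (j, i))"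
  by (auto simp: mat_adjoint_alt)

lemma mat_adjoint_adjoint [simp]: "mat_adjoint (mat_adjoint (A :: complex mat)) = A"
  by (rule eq_matI) auto

lemma mat_adjoint_one [simp]: "mat_adjoint (1\<^sub>m n :: complex mat) = 1\<^sub>m n"
  by (rule eq_matI) auto

lemma mat_adjoint_mult:
  assumes "(A :: complex mat) \<in> carrier_mat n k" "B \<in> carrier_mat k m"
  shows "mat_adjoint (A * B) = mat_adjoint B * mat_adjoint A"
  by (rule eq_matI) (use assms in \<open>auto simp: mult_mat_simps mult.commute\<close>)

lemma mat_adjoint_smult: "mat_adjoint (c \<cdot>\<^sub>m A) = cnj c \<cdot>\<^sub>m mat_adjoint A"
  by (rule eq_matI) auto

lemma mat_conj_carrier [simp]: "A \<in> carrier_mat n m \<Longrightarrow> mat_conj A \<in> carrier_mat n m"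
  by (auto simp: mat_conj_def)

lemma dim_mat_conj [simp]: "dim_row (mat_conj A) = dim_row A" "dim_col (mat_conj A) = dim_col A"
  by (auto simp: mat_conj_def)

lemma index_mat_conj [simp]:
  "i < dim_row A \<Longrightarrow> j < dim_col A \<Longrightarrow> mat_conj A $$ (i, j) = cnj (A $$ (i, j))"
  by (auto simp: mat_conj_def)

lemma mat_conj_conj [simp]: "mat_conj (mat_conj A) = A"
  by (rule eq_matI) auto

lemma mat_conj_mult:
  assumes "A \<in> carrier_mat n k" "B \<in> carrier_mat k m"
  shows "mat_conj (A * B) = mat_conj A * mat_conj B"
  by (rule eq_matI) (use assms in \<open>auto simp: mult_mat_simps\<close>)

lemma mat_conj_one [simp]: "mat_conj (1\<^sub>m n) = 1\<^sub>m n"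
  by (rule eq_matI) auto

lemma mat_adjoint_conj: "mat_adjoint (mat_conj A) = mat_conj (mat_adjoint A)"
  by (rule eq_matI) auto

interpretation cnj_hom: comm_ring_hom cnj
  by unfold_locales simp_all

lemma det_mat_conj: "det (mat_conj A) = cnj (det A)"
  unfolding mat_conj_def by (rule cnj_hom.hom_det)

lemma det_mat_adjoint:
  assumes "A \<in> carrier_mat n n"
  shows "det (mat_adjoint A) = cnj (det A)"
proof -
  have "mat_adjoint A = transpose_mat (mat_conj A)"
    by (rule eq_matI) auto
  then show ?thesis
    using assms by (simp add: det_transpose[of _ n] det_mat_conj)
qed

lemma mat_conj_four_block_diag:
  assumes "A \<in> carrier_mat k k" "D \<in> carrier_mat m m"
  shows "mat_conj (four_block_mat A (0\<^sub>m k m) (0\<^sub>m m k) D)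
    = four_block_mat (mat_conj A) (0\<^sub>m k m) (0\<^sub>m m k) (mat_conj D)"
  using assms by (intro eq_matI) auto

lemma mat_adjoint_four_block_diag:
  assumes "(A :: complex mat) \<in> carrier_mat k k" "D \<in> carrier_mat m m"
  shows "mat_adjoint (four_block_mat A (0\<^sub>m k m) (0\<^sub>m m k) D)
    = four_block_mat (mat_adjoint A) (0\<^sub>m k m) (0\<^sub>m m k) (mat_adjoint D)"
  using assms by (intro eq_matI) auto

lemma mult_four_block_diag:
  assumes "A1 \<in> carrier_mat k k" "D1 \<in> carrier_mat m m" "A2 \<in> carrier_mat k k" "D2 \<in> carrier_mat m m"
  shows "four_block_mat A1 (0\<^sub>m k m) (0\<^sub>m m k) D1 * four_block_mat A2 (0\<^sub>m k m) (0\<^sub>m m k) D2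
    = four_block_mat (A1 * A2) (0\<^sub>m k m) (0\<^sub>m m k) (D1 * D2)"
proof -
  have "A1 * A2 \<in> carrier_mat k k" "D1 * D2 \<in> carrier_mat m m"
    using assms by auto
  then show ?thesis
    using assms by (subst mult_four_block_mat[of _ k k _ m _ m _ _ k _ m]) auto
qed

lemma four_block_diag_eqD:
  assumes "A \<in> carrier_mat k k" "D \<in> carrier_mat m m" "A' \<in> carrier_mat k k" "D' \<in> carrier_mat m m"
    and eq: "four_block_mat A (0\<^sub>m k m) (0\<^sub>m m k) D = four_block_mat A' (0\<^sub>m k m) (0\<^sub>m m k) D'"
  shows "A = A'" "D = D'"
proof -
  have entry: "four_block_mat A (0\<^sub>m k m) (0\<^sub>m m k) D $$ (i, j) = four_block_mat A' (0\<^sub>m k m) (0\<^sub>m m k) D' $$ (i, j)" for i j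
    using eq by simp
  show "A = A'"
  proof (rule eq_matI)
    fix i j assume "i < dim_row A'" "j < dim_col A'"
    then show "A $$ (i, j) = A' $$ (i, j)"
      using entry[of i j] assms(1-4) by simp
  qed (use assms in auto)
  show "D = D'"
  proof (rule eq_matI)
    fix i j assume "i < dim_row D'" "j < dim_col D'"
    then show "D $$ (i, j) = D' $$ (i, j)"
      using entry[of "k + i" "k + j"] assms(1-4) by simp
  qed (use assms in auto)
qed

lemma four_block_diag_one: "four_block_mat (1\<^sub>m k) (0\<^sub>m k m) (0\<^sub>m m k) (1\<^sub>m m) = 1\<^sub>m (k + m)"
  by (rule eq_matI) auto

lemma mat_trace_mult_comm:
  assumes "A \<in> carrier_mat n m" "B \<in> carrier_mat m n"
  shows "mat_trace (A * B) = mat_trace (B * A)"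
proof -
  have "mat_trace (A * B) = (\<Sum>i<n. \<Sum>l<m. A $$ (i, l) * B $$ (l, i))"
    using assms by (auto simp: mat_trace_def mult_mat_simps intro!: sum.cong)
  also have "\<dots> = (\<Sum>l<m. \<Sum>i<n. B $$ (l, i) * A $$ (i, l))"
    by (subst sum.swap) (simp add: mult.commute)
  also have "\<dots> = mat_trace (B * A)"
    using assms by (auto simp: mat_trace_def mult_mat_simps intro!: sum.cong)
  finally show ?thesis .
qed

definition diag_list_mat :: "complex list \<Rightarrow> complex mat" where
  "diag_list_mat es = mat (length es) (length es) (\<lambda>(i, j). if i = j then es ! i else 0)"

lemma diag_list_mat_carrier [simp]: "diag_list_mat es \<in> carrier_mat (length es) (length es)"
  by (simp add: diag_list_mat_def)

lemma dim_diag_list_mat [simp]: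
  "dim_row (diag_list_mat es) = length es" "dim_col (diag_list_mat es) = length es"
  by (simp_all add: diag_list_mat_def)

lemma index_diag_list_mat [simp]:
  "i < length es \<Longrightarrow> j < length es \<Longrightarrow> diag_list_mat es $$ (i, j) = (if i = j then es ! i else 0)"
  by (simp add: diag_list_mat_def)

lemma upper_triangular_diag_list_mat: "upper_triangular (diag_list_mat es)"
  unfolding upper_triangular_def by auto

lemma diag_mat_diag_list_mat: "diag_mat (diag_list_mat es) = es"
  unfolding diag_mat_def by (rule nth_equalityI) auto

lemma char_poly_diag_list_mat: "char_poly (diag_list_mat es) = (\<Prod>e\<leftarrow>es. [:-e, 1:])"
  using char_poly_upper_triangular[OF diag_list_mat_carrier upper_triangular_diag_list_mat]
  by (simp only: diag_mat_diag_list_mat)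

lemma det_diag_list_mat: "det (diag_list_mat es) = prod_list es"
  using det_upper_triangular[OF upper_triangular_diag_list_mat diag_list_mat_carrier]
  by (simp only: diag_mat_diag_list_mat)

lemma mat_trace_diag_list_mat: "mat_trace (diag_list_mat es) = sum_list es"
  by (simp add: mat_trace_def sum_list_sum_nth atLeast0LessThan)

lemma diag_list_mat_mult:
  "length as = length bs \<Longrightarrow> diag_list_mat as * diag_list_mat bs = diag_list_mat (map2 (*) as bs)"
  by (rule eq_matI) (auto simp: mult_mat_simps if_distrib if_distribR sum.If_cases)

lemma mat_conj_diag_list_mat: "mat_conj (diag_list_mat es) = diag_list_mat (map cnj es)"
  by (rule eq_matI) auto

lemma mat_adjoint_diag_list_mat: "mat_adjoint (diag_list_mat es) = diag_list_mat (map cnj es)"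
  by (rule eq_matI) auto

lemma diag_list_mat_append:
  "diag_list_mat (xs @ ys) = four_block_mat (diag_list_mat xs) (0\<^sub>m (length xs) (length ys))
     (0\<^sub>m (length ys) (length xs)) (diag_list_mat ys)"
  by (rule eq_matI) (auto simp: nth_append)

lemma diag_list_mat_replicate: "diag_list_mat (replicate k e) = e \<cdot>\<^sub>m 1\<^sub>m k"
  by (rule eq_matI) auto

lemma index_diag_list_mat_mult_left:
  assumes "B \<in> carrier_mat n m" "length es = n" "i < n" "j < m"
  shows "(diag_list_mat es * B) $$ (i, j) = es ! i * B $$ (i, j)"
proof -
  have "(diag_list_mat es * B) $$ (i, j) = (\<Sum>l<n. diag_list_mat es $$ (i, l) * B $$ (l, j))"
    using assms by (simp add: mult_mat_simps)
  also have "\<dots> = (\<Sum>l<n. if l = i then es ! i * B $$ (i, j) else 0)"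
    by (intro sum.cong refl) (use assms in auto)
  finally show ?thesis
    using assms by simp
qed

lemma index_diag_list_mat_mult_right:
  assumes "B \<in> carrier_mat m n" "length es = n" "i < m" "j < n"
  shows "(B * diag_list_mat es) $$ (i, j) = B $$ (i, j) * es ! j"
proof -
  have "(B * diag_list_mat es) $$ (i, j) = (\<Sum>l<n. B $$ (i, l) * diag_list_mat es $$ (l, j))"
    using assms by (simp add: mult_mat_simps)
  also have "\<dots> = (\<Sum>l<n. if l = j then B $$ (i, j) * es ! j else 0)"
    by (intro sum.cong refl) (use assms in auto)
  finally show ?thesis
    using assms by simp
qed

lemma length_eq_dim_if_char_poly_linear_factors:
  assumes "M \<in> carrier_mat n n" "char_poly M = (\<Prod>x\<leftarrow>xs. [:f x, 1:])"
  shows "length xs = n"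
  using assms degree_monic_char_poly[of M n] degree_linear_factors[of f xs] by auto

lemma linear_factors_mset_inj:
  fixes A B :: "complex multiset"
  assumes "(\<Prod>a\<in>#A. [:-a, 1:]) = (\<Prod>a\<in>#B. [:-a, 1:])"
  shows "A = B"
  using assms
proof (induction A arbitrary: B)
  case empty
  show ?case
  proof (rule ccontr)
    assume "{#} \<noteq> B"
    then obtain b where b: "b \<in># B"
      by (metis multiset_nonemptyE)
    have "poly (\<Prod>a\<in>#B. [:-a, 1:]) b = 0"
      using b by (auto simp: poly_prod_mset prod_mset_zero_iff)
    with empty.prems show False
      by simp
  qed
next
  case (add x A)
  have "poly (\<Prod>a\<in>#B. [:-a, 1:]) x = 0"
    unfolding add.prems[symmetric] by simp
  then have "x \<in># B"
    by (auto simp: poly_prod_mset prod_mset_zero_iff)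
  then obtain B' where B: "B = add_mset x B'"
    by (metis mset_add)
  have "[:-x, 1:] * (\<Prod>a\<in>#A. [:-a, 1:]) = [:-x, 1:] * (\<Prod>a\<in>#B'. [:-a, 1:])"
    using add.prems B by simp
  then have "(\<Prod>a\<in>#A. [:-a, 1:]) = (\<Prod>a\<in>#B'. [:-a, 1:])"
    by (metis mult_cancel_left pCons_eq_0_iff zero_neq_one)
  from add.IH[OF this] B show ?case
    by simp
qed

subsection \<open>Unitary matrices and the spectral theorem\<close>

definition unitary :: "nat \<Rightarrow> complex mat \<Rightarrow> bool" where
  "unitary n U \<longleftrightarrow> U \<in> carrier_mat n n \<and> mat_adjoint U * U = 1\<^sub>m n"

lemma unitary_carrier: "unitary n U \<Longrightarrow> U \<in> carrier_mat n n"
  unfolding unitary_def by auto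

lemma unitary_adjoint_left: "unitary n U \<Longrightarrow> mat_adjoint U * U = 1\<^sub>m n"
  unfolding unitary_def by auto

lemma unitary_adjoint_right: "unitary n U \<Longrightarrow> U * mat_adjoint U = 1\<^sub>m n"
  unfolding unitary_def by (auto intro: mat_mult_left_right_inverse)

lemma unitary_similar:
  assumes "unitary n U" "M \<in> carrier_mat n n"
  shows "similar_mat (mat_adjoint U * M * U) M"
  unfolding similar_mat_def similar_mat_wit_def
  using assms unitary_carrier[OF assms(1)] unitary_adjoint_left[OF assms(1)]
    unitary_adjoint_right[OF assms(1)]
  by (intro exI[of _ "mat_adjoint U"] exI[of _ U]) auto

lemma unitary_mult:
  assumes U: "unitary n U" and V: "unitary n V"
  shows "unitary n (U * V)"
proof -
  note carr = unitary_carrier[OF U] unitary_carrier[OF V]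
  have "mat_adjoint (U * V) * (U * V) = mat_adjoint V * ((mat_adjoint U * U) * V)"
    using carr by (simp add: mat_adjoint_mult[of _ n n _ n] assoc_mult_mat[of _ n n _ n _ n])
  also have "\<dots> = 1\<^sub>m n"
    using carr by (simp add: unitary_adjoint_left[OF U] unitary_adjoint_left[OF V])
  finally show ?thesis
    using carr unfolding unitary_def by auto
qed

lemma unitary_mat_conj:
  assumes U: "unitary n U"
  shows "unitary n (mat_conj U)"
proof -
  have "mat_adjoint (mat_conj U) * mat_conj U = mat_conj (mat_adjoint U * U)"
    using unitary_carrier[OF U] by (simp add: mat_adjoint_conj mat_conj_mult[of _ n n])
  then show ?thesis
    using U unfolding unitary_def by simp
qed

lemma unitary_four_block_diag:
  assumes U: "unitary m U"
  shows "unitary (k + m) (four_block_mat (1\<^sub>m k) (0\<^sub>m k m) (0\<^sub>m m k) U)"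
proof -
  have Uc: "U \<in> carrier_mat m m"
    using unitary_carrier[OF U] .
  have "mat_adjoint (four_block_mat (1\<^sub>m k) (0\<^sub>m k m) (0\<^sub>m m k) U) * four_block_mat (1\<^sub>m k) (0\<^sub>m k m) (0\<^sub>m m k) U
    = four_block_mat (1\<^sub>m k) (0\<^sub>m k m) (0\<^sub>m m k) (mat_adjoint U * U)"
    using Uc by (simp add: mat_adjoint_four_block_diag mult_four_block_diag)
  then show ?thesis
    using Uc unfolding unitary_def unitary_adjoint_left[OF U] four_block_diag_one by auto
qed

lemma unitary_householder:
  assumes w: "w \<in> carrier_vec n"
    and c: "c * (\<Sum>i<n. (cmod (w $ i))\<^sup>2) = 2 \<or> c = 0"
  shows "unitary n (mat n n (\<lambda>(i, j). (if i = j then 1 else 0) - complex_of_real c * w $ i * cnj (w $ j)))"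
    (is "unitary n ?H")
proof -
  define s where "s = (\<Sum>i<n. (cmod (w $ i))\<^sup>2)"
  define cc where "cc = complex_of_real c"
  have sw: "(\<Sum>k<n. cnj (w $ k) * w $ k) = complex_of_real s"
    unfolding s_def of_real_sum by (intro sum.cong refl) (metis complex_norm_square mult.commute)
  have "mat_adjoint ?H * ?H = 1\<^sub>m n"
  proof (rule eq_matI)
    fix i j assume "i < dim_row (1\<^sub>m n)" "j < dim_col (1\<^sub>m n)"
    then have i: "i < n" and j: "j < n"
      by auto
    define \<delta> where "\<delta> = (\<lambda>(a::nat) (b::nat). if a = b then (1::complex) else 0)"
    have "(mat_adjoint ?H * ?H) $$ (i, j) = (\<Sum>k<n. cnj (?H $$ (k, i)) * ?H $$ (k, j))"
      using i j by (simp add: mult_mat_simps)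
    also have "\<dots> = (\<Sum>k<n. (\<delta> k i - cc * cnj (w $ k) * w $ i) * (\<delta> k j - cc * w $ k * cnj (w $ j)))"
      using i j unfolding \<delta>_def cc_def by (intro sum.cong) auto
    also have "\<dots> = (\<Sum>k<n. \<delta> k i * \<delta> k j) - (\<Sum>k<n. \<delta> k i * (cc * w $ k * cnj (w $ j)))
       - (\<Sum>k<n. cc * cnj (w $ k) * w $ i * \<delta> k j) + cc * cc * w $ i * cnj (w $ j) * (\<Sum>k<n. cnj (w $ k) * w $ k)"
      by (simp add: algebra_simps sum.distrib sum_subtractf sum_distrib_left)
    also have "\<dots> = \<delta> i j + cc * w $ i * cnj (w $ j) * (complex_of_real (c * s) - 2)"
      unfolding sw using i j unfolding \<delta>_def cc_def
      by (simp add: if_distrib if_distribR sum.If_cases algebra_simps)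
    also have "\<dots> = \<delta> i j"
      using c unfolding cc_def s_def by (auto simp del: of_real_mult)
    finally show "(mat_adjoint ?H * ?H) $$ (i, j) = 1\<^sub>m n $$ (i, j)"
      using i j unfolding \<delta>_def by simp
  qed auto
  then show ?thesis
    unfolding unitary_def by simp
qed

text \<open>The Householder reflection with \<open>w = e\<^sub>0 - u\<close> maps \<open>e\<^sub>0\<close> to the unit vector \<open>u\<close>;
  this needs \<open>u\<^sub>0\<close> real.\<close>

lemma unitary_with_first_col:
  assumes u: "u \<in> carrier_vec n" and n: "0 < n"
    and norm: "(\<Sum>i<n. (cmod (u $ i))\<^sup>2) = 1" and u0: "u $ 0 = complex_of_real t"
  shows "\<exists>H. unitary n H \<and> col H 0 = u"
proof -
  define w where "w = vec n (\<lambda>i. (if i = 0 then 1 else 0) - u $ i)"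
  define s where "s = (\<Sum>i<n. (cmod (w $ i))\<^sup>2)"
  define c where "c = 2 / s"
  define H where "H = mat n n (\<lambda>(i, j). (if i = j then 1 else 0) - complex_of_real c * w $ i * cnj (w $ j))"
  have w0: "w $ 0 = complex_of_real (1 - t)"
    using n u0 unfolding w_def by simp
  have norm_w: "(cmod (w $ i))\<^sup>2 = (cmod (u $ i))\<^sup>2 + (if i = 0 then 1 - 2 * t else 0)" if i: "i < n" for i
  proof (cases "i = 0")
    case True
    have "cmod (w $ 0) = \<bar>1 - t\<bar>" "cmod (u $ 0) = \<bar>t\<bar>"
      by (simp_all only: w0 u0 norm_of_real)
    then show ?thesis
      using True by (simp add: power2_eq_square algebra_simps)
  next
    case False
    then show ?thesis
      using i unfolding w_def by (simp add: norm_minus_commute)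
  qed
  have s: "s = 2 - 2 * t"
  proof -
    have "s = (\<Sum>i<n. (cmod (u $ i))\<^sup>2) + (\<Sum>i<n. (if i = 0 then 1 - 2 * t else 0))"
      unfolding s_def sum.distrib[symmetric] by (rule sum.cong) (simp_all add: norm_w)
    then show ?thesis
      using n norm by simp
  qed
  have "c * s = 2 \<or> c = 0"
    unfolding c_def by auto
  then have "unitary n H"
    unfolding H_def s_def by (intro unitary_householder) (simp_all add: w_def)
  moreover have "col H 0 = u"
  proof (rule eq_vecI)
    fix i assume "i < dim_vec u"
    then have i: "i < n"
      using u by simp
    have "col H 0 $ i = (if i = 0 then 1 else 0) - complex_of_real (c * (1 - t)) * w $ i"
      using i n w0 unfolding H_def by simp
    also have "\<dots> = u $ i"
    proof (cases "s = 0")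
      case True
      then have "\<forall>j\<in>{..<n}. (cmod (w $ j))\<^sup>2 = 0"
        unfolding s_def by (subst sum_nonneg_eq_0_iff[symmetric]) auto
      then have "w $ i = 0"
        using i by auto
      then show ?thesis
        using True i unfolding c_def w_def by simp
    next
      case False
      then have "c * (1 - t) = 1"
        unfolding c_def s by (simp add: field_simps)
      then show ?thesis
        using i unfolding w_def by simp
    qed
    finally show "col H 0 $ i = u $ i" .
  qed (use u H_def in simp)
  ultimately show ?thesis
    by blast
qed

lemma unitary_with_eigenvector_first_col:
  assumes M: "M \<in> carrier_mat n n" and ev: "eigenvalue M e"
  shows "\<exists>U. unitary n U \<and> M *\<^sub>v col U 0 = e \<cdot>\<^sub>v col U 0"
proof -
  obtain v where "eigenvector M v e"
    using ev unfolding eigenvalue_def by blast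
  then have v: "v \<in> carrier_vec n" and v0: "v \<noteq> 0\<^sub>v n" and Mv: "M *\<^sub>v v = e \<cdot>\<^sub>v v"
    using M unfolding eigenvector_def by auto
  obtain i0 where i0: "i0 < n" "v $ i0 \<noteq> 0"
    using v v0 by (metis eq_vecI carrier_vecD index_zero_vec)
  have n: "0 < n"
    using i0 by simp
  define nv where "nv = sqrt (\<Sum>i<n. (cmod (v $ i))\<^sup>2)"
  have spos: "0 < (\<Sum>i<n. (cmod (v $ i))\<^sup>2)"
    by (rule sum_pos2[of _ i0]) (use i0 in auto)
  then have nvpos: "nv > 0" and nv2: "nv\<^sup>2 = (\<Sum>i<n. (cmod (v $ i))\<^sup>2)"
    unfolding nv_def by (simp_all add: sum_nonneg)
  \<comment> \<open>The phase \<open>th\<close> makes the first entry of the normalised eigenvector real.\<close>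
  define th where "th = (if v $ 0 = 0 then 1 else cnj (v $ 0) / complex_of_real (cmod (v $ 0)))"
  have th: "cmod th = 1"
    unfolding th_def by (auto simp: norm_divide)
  define u where "u = (th / complex_of_real nv) \<cdot>\<^sub>v v"
  have u: "u \<in> carrier_vec n"
    using v unfolding u_def by simp
  have "(cmod (u $ i))\<^sup>2 = (cmod (v $ i))\<^sup>2 / nv\<^sup>2" if "i < n" for i
    using that v nvpos th unfolding u_def
    by (auto simp: norm_mult norm_divide power_divide power_mult_distrib)
  then have unorm: "(\<Sum>i<n. (cmod (u $ i))\<^sup>2) = 1"
    using spos by (simp add: sum_divide_distrib[symmetric] nv2)
  have u0: "u $ 0 = complex_of_real (cmod (v $ 0) / nv)"
  proof (cases "v $ 0 = 0")
    case True
    then show ?thesis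
      using v n unfolding u_def th_def by simp
  next
    case False
    have "cnj (v $ 0) * v $ 0 = complex_of_real ((cmod (v $ 0))\<^sup>2)"
      by (metis complex_norm_square mult.commute)
    then show ?thesis
      using False v n unfolding u_def th_def by (simp add: power2_eq_square field_simps)
  qed
  have Mu: "M *\<^sub>v u = e \<cdot>\<^sub>v u"
    unfolding u_def by (simp add: mult_mat_vec[OF M v] Mv smult_smult_assoc mult.commute)
  obtain U where "unitary n U" "col U 0 = u"
    using unitary_with_first_col[OF u n unorm u0] by blast
  then show ?thesis
    using Mu by blast
qed

lemma hermitian_deflation:
  assumes M: "M \<in> carrier_mat (Suc n1) (Suc n1)" and herm: "mat_adjoint M = M"
    and U: "unitary (Suc n1) U" and MU: "M *\<^sub>v col U 0 = e \<cdot>\<^sub>v col U 0"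
  obtains M3 where "M3 \<in> carrier_mat n1 n1" "mat_adjoint M3 = M3"
    "mat_adjoint U * M * U = four_block_mat (mat 1 1 (\<lambda>_. e)) (0\<^sub>m 1 n1) (0\<^sub>m n1 1) M3"
proof -
  define n where "n = Suc n1"
  have Uc: "U \<in> carrier_mat n n" and Mc: "M \<in> carrier_mat n n"
    using unitary_carrier[OF U] M unfolding n_def .
  have colU: "col U 0 \<in> carrier_vec n"
    using col_carrier_vec[OF _ Uc] n_def by simp
  define M' where "M' = mat_adjoint U * M * U"
  have M'c: "M' \<in> carrier_mat n n"
    unfolding M'_def using Uc Mc n_def by auto
  have herm': "mat_adjoint M' = M'"
    unfolding M'_def using Uc Mc herm n_def
    by (simp add: mat_adjoint_mult[of _ n n _ n] assoc_mult_mat[of _ n n _ n _ n])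
  have "col M' 0 = (mat_adjoint U * M) *\<^sub>v col U 0"
    unfolding M'_def by (rule col_mult2) (use Uc Mc n_def in auto)
  also have "\<dots> = mat_adjoint U *\<^sub>v (M *\<^sub>v col U 0)"
    using Uc Mc colU by (simp add: assoc_mult_mat_vec[of _ n n _ n])
  also have "\<dots> = e \<cdot>\<^sub>v (mat_adjoint U *\<^sub>v col U 0)"
    unfolding MU using Uc colU by (simp add: mult_mat_vec[of _ n n])
  also have "mat_adjoint U *\<^sub>v col U 0 = col (mat_adjoint U * U) 0"
    by (rule col_mult2[symmetric]) (use Uc n_def in auto)
  finally have colM': "col M' 0 = e \<cdot>\<^sub>v unit_vec n 0"
    unfolding unitary_adjoint_left[OF U] n_def by simp
  have col0: "M' $$ (i, 0) = (if i = 0 then e else 0)" if "i < n" for i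
  proof -
    have "M' $$ (i, 0) = col M' 0 $ i"
      using M'c that n_def by simp
    then show ?thesis
      unfolding colM' using that n_def by simp
  qed
  have entry_cnj: "cnj (M' $$ (b, a)) = M' $$ (a, b)" if "a < n" "b < n" for a b
    using arg_cong[OF herm', of "\<lambda>X. X $$ (a, b)"] that M'c by simp
  have e_real: "cnj e = e"
    using entry_cnj[of 0 0] col0[of 0] n_def by simp
  have row0: "M' $$ (0, j) = (if j = 0 then e else 0)" if "j < n" for j
    using entry_cnj[of 0 j] col0[of j] that n_def e_real by (cases "j = 0") auto
  define M3 where "M3 = mat n1 n1 (\<lambda>(i, j). M' $$ (Suc i, Suc j))"
  have M3c: "M3 \<in> carrier_mat n1 n1"
    unfolding M3_def by simp
  have "mat_adjoint M3 = M3"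
    by (rule eq_matI) (use entry_cnj n_def in \<open>auto simp: M3_def\<close>)
  moreover have "M' = four_block_mat (mat 1 1 (\<lambda>_. e)) (0\<^sub>m 1 n1) (0\<^sub>m n1 1) M3"
  proof (rule eq_matI)
    fix i j assume "i < dim_row (four_block_mat (mat 1 1 (\<lambda>_. e)) (0\<^sub>m 1 n1) (0\<^sub>m n1 1) M3)"
      "j < dim_col (four_block_mat (mat 1 1 (\<lambda>_. e)) (0\<^sub>m 1 n1) (0\<^sub>m n1 1) M3)"
    then have "i < Suc n1" "j < Suc n1"
      using M3c by auto
    then show "M' $$ (i, j) = four_block_mat (mat 1 1 (\<lambda>_. e)) (0\<^sub>m 1 n1) (0\<^sub>m n1 1) M3 $$ (i, j)"
      using M3c col0 row0 n_def unfolding M3_def by (cases i; cases j) auto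
  qed (use M'c M3c n_def in auto)
  ultimately show ?thesis
    using that M3c unfolding M'_def by blast
qed

theorem hermitian_unitary_diagonalization:
  assumes "M \<in> carrier_mat n n" "mat_adjoint M = M" "char_poly M = (\<Prod>e\<leftarrow>es. [:-e, 1:])"
  shows "\<exists>U. unitary n U \<and> mat_adjoint U * M * U = diag_list_mat es"
  using assms
proof (induction es arbitrary: n M)
  case Nil
  then have "n = 0"
    using length_eq_dim_if_char_poly_linear_factors[of M n uminus "[]"] by simp
  then show ?case
    by (intro exI[of _ "1\<^sub>m 0"]) (auto simp: unitary_def intro!: eq_matI)
next
  case (Cons e es n M)
  from Cons.prems have M: "M \<in> carrier_mat n n" and herm: "mat_adjoint M = M"
    and cp: "char_poly M = [:-e, 1:] * (\<Prod>e\<leftarrow>es. [:-e, 1:])"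
    by auto
  define n1 where "n1 = length es"
  have n: "n = Suc n1"
    using length_eq_dim_if_char_poly_linear_factors[OF M Cons.prems(3)] n1_def by simp
  have "eigenvalue M e"
    unfolding eigenvalue_root_char_poly[OF M] cp by simp
  then obtain U1 where U1: "unitary n U1" and U1ev: "M *\<^sub>v col U1 0 = e \<cdot>\<^sub>v col U1 0"
    using unitary_with_eigenvector_first_col[OF M] by blast
  obtain M3 where M3c: "M3 \<in> carrier_mat n1 n1" and herm3: "mat_adjoint M3 = M3"
    and split: "mat_adjoint U1 * M * U1 = four_block_mat (mat 1 1 (\<lambda>_. e)) (0\<^sub>m 1 n1) (0\<^sub>m n1 1) M3"
    using hermitian_deflation[OF M[unfolded n] herm U1[unfolded n] U1ev] .
  have "char_poly (mat_adjoint U1 * M * U1) = char_poly M"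
    by (rule char_poly_similar[OF unitary_similar[OF U1 M]])
  moreover have "char_poly (mat_adjoint U1 * M * U1) = [:-e, 1:] * char_poly M3"
    unfolding split using M3c
    by (subst char_poly_four_block_zeros_col[of _ _ n1]) (auto simp: char_poly_defs det_def sign_def)
  ultimately have "char_poly M3 = (\<Prod>e\<leftarrow>es. [:-e, 1:])"
    unfolding cp by (metis mult_cancel_left pCons_eq_0_iff zero_neq_one)
  then obtain U3 where U3: "unitary n1 U3" and D3: "mat_adjoint U3 * M3 * U3 = diag_list_mat es"
    using Cons.IH[OF M3c herm3] by blast
  define V where "V = four_block_mat (1\<^sub>m 1) (0\<^sub>m 1 n1) (0\<^sub>m n1 1) U3"
  have V: "unitary n V"
    using unitary_four_block_diag[OF U3, of 1] unfolding V_def n by simp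
  have U1c: "U1 \<in> carrier_mat n n" and U3c: "U3 \<in> carrier_mat n1 n1" and Vc: "V \<in> carrier_mat n n"
    using unitary_carrier[OF U1] unitary_carrier[OF U3] unitary_carrier[OF V] .
  have "mat_adjoint (U1 * V) * M * (U1 * V) = mat_adjoint V * (mat_adjoint U1 * M * U1) * V"
    using U1c Vc M
    by (simp add: mat_adjoint_mult[of _ n n _ n] assoc_mult_mat[of _ n n _ n _ n] mult_carrier_mat[of _ n n _ n])
  also have "\<dots> = four_block_mat (mat 1 1 (\<lambda>_. e)) (0\<^sub>m 1 n1) (0\<^sub>m n1 1) (mat_adjoint U3 * M3 * U3)"
    unfolding split V_def using U3c M3c
    by (simp add: mat_adjoint_four_block_diag mult_four_block_diag mult_carrier_mat[of _ n1 n1 _ n1])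
  also have "\<dots> = diag_list_mat (e # es)"
    unfolding D3 by (rule eq_matI) (auto simp: n1_def nth_Cons')
  finally show ?case
    using unitary_mult[OF U1 V] by blast
qed

subsection \<open>Pairing sums\<close>

text \<open>Listing the pairs first and the unpaired values after them yields the \<open>\<tau>\<close>, \<open>r\<close> and \<open>\<rho>\<close>
  of trace_formula.\<close>

definition pairing_sum :: "real multiset \<Rightarrow> real \<Rightarrow> bool" where
  "pairing_sum S v \<longleftrightarrow> (\<exists>P T. S = mset (concat (map (\<lambda>(a, b, s). [a, b]) P) @ T)
     \<and> (\<forall>(a, b, s)\<in>set P. s \<in> {0, 1 :: nat})
     \<and> v = 2 * (\<Sum>(a, b, s)\<leftarrow>P. (-1) ^ s * a * b) + (\<Sum>t\<leftarrow>T. t\<^sup>2))"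

lemma pairing_sum_empty: "pairing_sum {#} 0"
  unfolding pairing_sum_def by (intro exI[of _ "[]"]) simp

lemma pairing_sum_add:
  assumes "pairing_sum S v" "pairing_sum S' v'"
  shows "pairing_sum (S + S') (v + v')"
proof -
  obtain P T where "S = mset (concat (map (\<lambda>(a, b, s). [a, b]) P) @ T)"
    "\<forall>(a, b, s)\<in>set P. s \<in> {0, 1 :: nat}" "v = 2 * (\<Sum>(a, b, s)\<leftarrow>P. (-1) ^ s * a * b) + (\<Sum>t\<leftarrow>T. t\<^sup>2)"
    using assms(1) unfolding pairing_sum_def by blast
  moreover obtain P' T' where "S' = mset (concat (map (\<lambda>(a, b, s). [a, b]) P') @ T')"
    "\<forall>(a, b, s)\<in>set P'. s \<in> {0, 1 :: nat}" "v' = 2 * (\<Sum>(a, b, s)\<leftarrow>P'. (-1) ^ s * a * b) + (\<Sum>t\<leftarrow>T'. t\<^sup>2)"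
    using assms(2) unfolding pairing_sum_def by blast
  ultimately show ?thesis
    unfolding pairing_sum_def
    by (intro exI[of _ "P @ P'"] exI[of _ "T @ T'"]) (auto simp: algebra_simps)
qed

lemma pairing_sum_with_zeros:
  assumes "length ps \<le> z"
  shows "pairing_sum (mset ps + replicate_mset z 0) 0"
proof -
  define P where "P = map (\<lambda>a. (a, 0 :: real, 0 :: nat)) ps"
  define T where "T = replicate (z - length ps) (0 :: real)"
  have "mset (concat (map (\<lambda>(a, b, s). [a, b]) P)) = mset ps + replicate_mset (length ps) 0"
    unfolding P_def by (induction ps) auto
  moreover have "replicate_mset z (0 :: real) = replicate_mset (length ps) 0 + mset T"
    using assms unfolding T_def by (metis le_add_diff_inverse mset_replicate replicate_add mset_append)
  ultimately have "mset ps + replicate_mset z 0 = mset (concat (map (\<lambda>(a, b, s). [a, b]) P) @ T)"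
    by simp
  moreover have "0 = 2 * (\<Sum>(a, b, s)\<leftarrow>P. (-1) ^ s * a * b) + (\<Sum>t\<leftarrow>T. t\<^sup>2)"
    unfolding P_def T_def by (simp add: comp_def sum_list_replicate)
  moreover have "\<forall>(a, b, s)\<in>set P. s \<in> {0, 1 :: nat}"
    unfolding P_def by auto
  ultimately show ?thesis
    unfolding pairing_sum_def by blast
qed

lemma mset_reciprocal_pairs:
  fixes S :: "real multiset"
  assumes "\<forall>x\<in>#S. x > 0" "image_mset (\<lambda>x. \<mu> / x) S = S" "\<mu> > 0"
  shows "\<exists>as m. S = mset (concat (map (\<lambda>a. [a, \<mu> / a]) as)) + replicate_mset m (sqrt \<mu>)"
  using assms
proof (induction "size S" arbitrary: S rule: less_induct)
  case less
  show ?case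
  proof (cases "S = {#}")
    case True
    show ?thesis
      by (rule exI[of _ "[]"], rule exI[of _ 0]) (simp add: True)
  next
    case False
    then obtain x where x: "x \<in># S"
      by (metis multiset_nonemptyE)
    then obtain S' where S': "S = add_mset x S'"
      by (metis mset_add)
    have xpos: "x > 0"
      using less.prems(1) x by auto
    show ?thesis
    proof (cases "x = sqrt \<mu>")
      case True
      then have "\<mu> / x = x"
        using less.prems(3) by (metis real_div_sqrt less_imp_le)
      then have "image_mset (\<lambda>x. \<mu> / x) S' = S'"
        using less.prems(2) unfolding S' by simp
      moreover have "size S' < size S" "\<forall>x\<in>#S'. x > 0"
        using less.prems(1) unfolding S' by simp_all
      ultimately obtain as m where "S' = mset (concat (map (\<lambda>a. [a, \<mu> / a]) as)) + replicate_mset m (sqrt \<mu>)"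
        using less.hyps less.prems(3) by blast
      then show ?thesis
        unfolding S' using True by (intro exI[of _ as] exI[of _ "Suc m"]) simp
    next
      case False
      define y where "y = \<mu> / x"
      have xy: "\<mu> / y = x"
        unfolding y_def using xpos less.prems(3) by simp
      have yx: "y \<noteq> x"
      proof
        assume "y = x"
        then have "x * x = \<mu>"
          unfolding y_def using xpos by (simp add: field_simps)
        then have "sqrt \<mu> = sqrt (x * x)"
          by simp
        then have "sqrt \<mu> = x"
          using xpos by simp
        then show False
          using False by simp
      qed
      have "y \<in># image_mset (\<lambda>x. \<mu> / x) S"
        unfolding y_def using x by auto
      then have "y \<in># S"
        using less.prems(2) by simp
      with yx have "y \<in># S'"
        unfolding S' by simp
      then obtain S'' where S'': "S' = add_mset y S''"
        by (metis mset_add)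
      have "add_mset x (add_mset y (image_mset (\<lambda>x. \<mu> / x) S'')) = add_mset x (add_mset y S'')"
        using less.prems(2) unfolding S' S'' by (simp add: add_mset_commute y_def[symmetric] xy)
      then have "image_mset (\<lambda>x. \<mu> / x) S'' = S''"
        by simp
      moreover have "size S'' < size S" "\<forall>x\<in>#S''. x > 0"
        using less.prems(1) unfolding S' S'' by simp_all
      ultimately obtain as m where "S'' = mset (concat (map (\<lambda>a. [a, \<mu> / a]) as)) + replicate_mset m (sqrt \<mu>)"
        using less.hyps less.prems(3) by blast
      then show ?thesis
        unfolding S' S'' by (intro exI[of _ "x # as"] exI[of _ m]) (simp add: y_def)
    qed
  qed
qed

text \<open>For \<open>\<lambda> > 0\<close> every pair \<open>{a, \<lambda>/a}\<close> gets sign \<open>+\<close> and every \<open>\<surd>\<lambda>\<close> stays unpaired;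
  for \<open>\<lambda> < 0\<close> everything gets sign \<open>-\<close>, the even number of copies of \<open>\<surd>|\<lambda>|\<close> being
  paired among themselves.\<close>

lemma pairing_sum_reciprocal:
  fixes S :: "real multiset" and l :: real
  assumes pos: "\<forall>x\<in>#S. x > 0" and inv: "image_mset (\<lambda>x. \<bar>l\<bar> / x) S = S" and l: "l \<noteq> 0"
    and even: "l < 0 \<Longrightarrow> even (size S)"
  shows "pairing_sum S (l * size S)"
proof -
  define \<mu> where "\<mu> = \<bar>l\<bar>"
  have mu: "\<mu> > 0"
    using l unfolding \<mu>_def by simp
  obtain as m where S: "S = mset (concat (map (\<lambda>a. [a, \<mu> / a]) as)) + replicate_mset m (sqrt \<mu>)"
    using mset_reciprocal_pairs[OF pos inv[folded \<mu>_def] mu] by blast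
  have as_pos: "a > 0" if "a \<in> set as" for a
    using pos that unfolding S by auto
  have size_S: "size S = 2 * length as + m"
    unfolding S by (induction as) auto
  have sq: "(sqrt \<mu>)\<^sup>2 = \<mu>"
    using mu by simp
  have mset_pairs: "mset (concat (map (\<lambda>(a, b, s). [a, b]) (map (\<lambda>a. (a, \<mu> / a, k)) as)))
    = mset (concat (map (\<lambda>a. [a, \<mu> / a]) as))" for k :: nat
    by (induction as) auto
  have sum_pairs: "(\<Sum>(a, b, s)\<leftarrow>map (\<lambda>a. (a, \<mu> / a, k)) as. (-1) ^ s * a * b)
    = (-1) ^ k * \<mu> * length as" for k :: nat
  proof -
    have "(\<Sum>(a, b, s)\<leftarrow>map (\<lambda>a. (a, \<mu> / a, k)) as. (-1) ^ s * a * b) = (\<Sum>a\<leftarrow>as. (-1) ^ k * \<mu>)"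
      by (simp add: comp_def, intro arg_cong[of _ _ sum_list] map_cong refl) (use as_pos in force)
    then show ?thesis
      by (simp add: sum_list_triv)
  qed
  show ?thesis
  proof (cases "l > 0")
    case True
    then have "l = \<mu>"
      unfolding \<mu>_def by simp
    define P where "P = map (\<lambda>a. (a, \<mu> / a, 0 :: nat)) as"
    define T where "T = replicate m (sqrt \<mu>)"
    have "S = mset (concat (map (\<lambda>(a, b, s). [a, b]) P) @ T)"
      unfolding P_def T_def by (simp only: S mset_pairs mset_append mset_replicate)
    moreover have "l * size S = 2 * (\<Sum>(a, b, s)\<leftarrow>P. (-1) ^ s * a * b) + (\<Sum>t\<leftarrow>T. t\<^sup>2)"
      unfolding P_def T_def sum_pairs size_S using \<open>l = \<mu>\<close> sq
      by (simp add: sum_list_replicate algebra_simps)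
    moreover have "\<forall>(a, b, s)\<in>set P. s \<in> {0, 1 :: nat}"
      unfolding P_def by auto
    ultimately show ?thesis
      unfolding pairing_sum_def by blast
  next
    case False
    then have "l = - \<mu>" "l < 0"
      using l unfolding \<mu>_def by auto
    then obtain q where m: "m = 2 * q"
      using even unfolding size_S by auto
    define P where "P = map (\<lambda>a. (a, \<mu> / a, 1 :: nat)) as @ replicate q (sqrt \<mu>, sqrt \<mu>, 1)"
    have "mset (concat (map (\<lambda>(a, b, s). [a, b]) (replicate q (sqrt \<mu>, sqrt \<mu>, 1 :: nat))))
      = replicate_mset m (sqrt \<mu>)"
      unfolding m by (induction q) auto
    then have "S = mset (concat (map (\<lambda>(a, b, s). [a, b]) P) @ [])"
      unfolding P_def by (simp only: S mset_pairs map_append concat_append mset_append append_Nil2)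
    moreover have "(\<Sum>(a, b, s)\<leftarrow>replicate q (sqrt \<mu>, sqrt \<mu>, 1 :: nat). (-1) ^ s * a * b) = - \<mu> * q"
      using sq by (simp add: power2_eq_square sum_list_replicate)
    then have "l * size S = 2 * (\<Sum>(a, b, s)\<leftarrow>P. (-1) ^ s * a * b) + (\<Sum>t\<leftarrow>[]. t\<^sup>2)"
      unfolding P_def map_append sum_list_append sum_pairs size_S m using \<open>l = - \<mu>\<close>
      by (simp add: algebra_simps)
    moreover have "\<forall>(a, b, s)\<in>set P. s \<in> {0, 1 :: nat}"
      unfolding P_def by auto
    ultimately show ?thesis
      unfolding pairing_sum_def by blast
  qed
qed

lemma trace_formula_if_pairing_sum:
  assumes "pairing_sum (mset (map \<sigma> [0..<d])) v"
  shows "\<exists>\<tau> r \<rho>. \<tau> permutes {..<d} \<and> even r \<and> r \<le> d \<and> (\<forall>i<r div 2. \<rho> i \<in> {0, 1})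
    \<and> trace_formula d \<sigma> \<tau> r \<rho> = v"
proof -
  obtain P T where PT: "mset (map \<sigma> [0..<d]) = mset (concat (map (\<lambda>(a, b, s). [a, b]) P) @ T)"
    and signs: "\<forall>(a, b, s)\<in>set P. s \<in> {0, 1 :: nat}"
    and v: "v = 2 * (\<Sum>(a, b, s)\<leftarrow>P. (-1) ^ s * a * b) + (\<Sum>t\<leftarrow>T. t\<^sup>2)"
    using assms unfolding pairing_sum_def by blast
  define L where "L = concat (map (\<lambda>(a, b, s). [a, b]) P) @ T"
  have len_pairs: "length (concat (map (\<lambda>(a, b, s). [a, b]) P)) = 2 * length P"
    by (induction P) auto
  have nth_pairs: "L ! (2 * i) = fst (P ! i) \<and> L ! (2 * i + 1) = fst (snd (P ! i))"
    if "i < length P" for i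
    using that unfolding L_def
  proof (induction P arbitrary: i)
    case (Cons x P)
    then show ?case
      by (cases x; cases i) (auto simp: nth_append)
  qed simp
  obtain \<tau> where \<tau>: "\<tau> permutes {..<length (map \<sigma> [0..<d])}" "permute_list \<tau> (map \<sigma> [0..<d]) = L"
    using mset_eq_permutation[OF PT[folded L_def, symmetric]] by blast
  have \<tau>d: "\<tau> permutes {..<d}"
    using \<tau>(1) by simp
  define r where "r = 2 * length P"
  define \<rho> where "\<rho> = (\<lambda>i. snd (snd (P ! i)))"
  have d: "d = r + length T"
    using arg_cong[OF PT, of size] unfolding r_def by (simp add: len_pairs)
  have L_nth: "L ! i = \<sigma> (\<tau> i)" if "i < d" for i
    using \<tau>(2)[symmetric] that permutes_in_image[OF \<tau>d, of i] by (simp add: permute_list_def)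
  have "(\<Sum>i<r div 2. (-1) ^ \<rho> i * \<sigma> (\<tau> (2 * i)) * \<sigma> (\<tau> (2 * i + 1)))
    = (\<Sum>i<length P. (\<lambda>(a, b, s). (-1) ^ s * a * b) (P ! i))"
  proof (intro sum.cong)
    fix i assume "i \<in> {..<length P}"
    then have i: "i < length P"
      by simp
    then have "\<sigma> (\<tau> (2 * i)) = fst (P ! i)" "\<sigma> (\<tau> (2 * i + 1)) = fst (snd (P ! i))"
      using nth_pairs[OF i] L_nth[of "2 * i"] L_nth[of "2 * i + 1"] d unfolding r_def by auto
    then show "(-1) ^ \<rho> i * \<sigma> (\<tau> (2 * i)) * \<sigma> (\<tau> (2 * i + 1)) = (\<lambda>(a, b, s). (-1) ^ s * a * b) (P ! i)"
      unfolding \<rho>_def by (cases "P ! i") auto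
  qed (simp add: r_def)
  also have "\<dots> = (\<Sum>(a, b, s)\<leftarrow>P. (-1) ^ s * a * b)"
    by (simp add: sum_list_sum_nth atLeast0LessThan)
  finally have pairs: "(\<Sum>i<r div 2. (-1) ^ \<rho> i * \<sigma> (\<tau> (2 * i)) * \<sigma> (\<tau> (2 * i + 1)))
    = (\<Sum>(a, b, s)\<leftarrow>P. (-1) ^ s * a * b)" .
  have "(\<Sum>i\<in>{r..<d}. (\<sigma> (\<tau> i))\<^sup>2) = (\<Sum>i\<in>{r..<r + length T}. (T ! (i - r))\<^sup>2)"
    by (intro sum.cong) (auto simp: d L_nth[symmetric] L_def nth_append len_pairs r_def)
  also have "\<dots> = (\<Sum>i\<in>{0..<length T}. (T ! i)\<^sup>2)"
    using sum.shift_bounds_nat_ivl[of "\<lambda>i. (T ! (i - r))\<^sup>2" 0 r "length T"] by (simp add: add.commute)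
  also have "\<dots> = (\<Sum>t\<leftarrow>T. t\<^sup>2)"
    by (simp add: sum_list_sum_nth)
  finally have unpaired: "(\<Sum>i\<in>{r..<d}. (\<sigma> (\<tau> i))\<^sup>2) = (\<Sum>t\<leftarrow>T. t\<^sup>2)" .
  have "\<rho> i \<in> {0, 1}" if "i < r div 2" for i
  proof -
    have "P ! i \<in> set P"
      using that unfolding r_def by simp
    with signs show ?thesis
      unfolding \<rho>_def by (cases "P ! i") fastforce
  qed
  moreover have "trace_formula d \<sigma> \<tau> r \<rho> = v"
    unfolding trace_formula_def pairs unpaired v ..
  moreover have "even r" "r \<le> d"
    using d unfolding r_def by auto
  ultimately show ?thesis
    using \<tau>d by blast
qed

subsection \<open>Blocks with \<open>C C\<^sup>c = \<lambda> I\<close>\<close>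

lemma det_zero_if_zero_row:
  assumes A: "A \<in> carrier_mat n n" and i: "i < n" and zero: "\<And>j. j < n \<Longrightarrow> A $$ (i, j) = 0"
  shows "det A = 0"
proof -
  have "(\<Prod>i = 0..<n. A $$ (i, p i)) = 0" if p: "p permutes {0..<n}" for p
  proof -
    have "p i < n"
      using p i by (meson atLeastLessThan_iff permutes_in_image zero_le)
    then have "A $$ (i, p i) = 0"
      using zero by simp
    then show ?thesis
      using i by (intro prod_zero) auto
  qed
  then show ?thesis
    unfolding det_def using A by auto
qed

lemma orthogonal_nonzero_cols_le_rows:
  assumes Y: "Y \<in> carrier_mat m r" and gram: "mat_adjoint Y * Y = diag_list_mat es"
    and len: "length es = r" and nonzero: "0 \<notin> set es"
  shows "r \<le> m"
proof (rule ccontr)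
  assume "\<not> r \<le> m"
  define P where "P = mat r r (\<lambda>(i, j). if i < m then Y $$ (i, j) else 0)"
  have P: "P \<in> carrier_mat r r"
    unfolding P_def by simp
  have "mat_adjoint P * P = mat_adjoint Y * Y"
  proof (rule eq_matI)
    fix i j assume "i < dim_row (mat_adjoint Y * Y)" "j < dim_col (mat_adjoint Y * Y)"
    then have i: "i < r" and j: "j < r"
      using Y by auto
    have "(mat_adjoint P * P) $$ (i, j) = (\<Sum>l<r. cnj (P $$ (l, i)) * P $$ (l, j))"
      using P i j by (simp add: mult_mat_simps)
    also have "\<dots> = (\<Sum>l<m. cnj (Y $$ (l, i)) * Y $$ (l, j))"
      using \<open>\<not> r \<le> m\<close> i j unfolding P_def
      by (intro sum.mono_neutral_cong_right) auto
    also have "\<dots> = (mat_adjoint Y * Y) $$ (i, j)"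
      using Y i j by (simp add: mult_mat_simps)
    finally show "(mat_adjoint P * P) $$ (i, j) = (mat_adjoint Y * Y) $$ (i, j)" .
  qed (use P Y in auto)
  moreover have "det P = 0"
    by (rule det_zero_if_zero_row[OF P, of m]) (use \<open>\<not> r \<le> m\<close> in \<open>auto simp: P_def\<close>)
  then have "det (mat_adjoint P * P) = 0"
    using P by (simp add: det_mult[of _ r])
  ultimately have "det (diag_list_mat es) = 0"
    unfolding gram by simp
  then have "prod_list es = 0"
    by (simp only: det_diag_list_mat)
  with nonzero show False
    by (simp add: prod_list_zero_iff)
qed

text \<open>With \<open>V\<close> unitary diagonalising \<open>C\<^sup>* C\<close>, the matrices \<open>W = C V\<close> and
  \<open>Z = V\<^sup>* C\<^sup>c V\<^sup>c\<close> both have Gram matrix the diagonal of squared singular values,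
  while \<open>W Z = C C\<^sup>c V\<^sup>c\<close>.\<close>

lemma conj_product_frame:
  assumes C: "C \<in> carrier_mat k k"
    and cp: "char_poly (mat_adjoint C * C) = (\<Prod>y\<leftarrow>ys. [:- complex_of_real (y\<^sup>2), 1:])"
  obtains V W Z where "unitary k V" "W \<in> carrier_mat k k" "Z \<in> carrier_mat k k"
    "mat_adjoint W * W = diag_list_mat (map (\<lambda>y. complex_of_real (y\<^sup>2)) ys)"
    "mat_adjoint Z * Z = diag_list_mat (map (\<lambda>y. complex_of_real (y\<^sup>2)) ys)"
    "W * Z = C * mat_conj C * mat_conj V"
proof -
  note k_simps = mult_carrier_mat[of _ k k _ k] assoc_mult_mat[of _ k k _ k _ k]
    mat_adjoint_mult[of _ k k _ k] mat_conj_mult[of _ k k _ k]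
  define D where "D = diag_list_mat (map (\<lambda>y. complex_of_real (y\<^sup>2)) ys)"
  have X: "mat_adjoint C * C \<in> carrier_mat k k" "mat_adjoint (mat_adjoint C * C) = mat_adjoint C * C"
    using C by (simp_all add: k_simps)
  have "char_poly (mat_adjoint C * C) = (\<Prod>e\<leftarrow>map (\<lambda>y. complex_of_real (y\<^sup>2)) ys. [:-e, 1:])"
    unfolding cp by (simp add: comp_def)
  then obtain V where V: "unitary k V" and VXV: "mat_adjoint V * (mat_adjoint C * C) * V = D"
    unfolding D_def using hermitian_unitary_diagonalization[OF X] by blast
  have Vc: "V \<in> carrier_mat k k"
    using unitary_carrier[OF V] .
  have VVB: "V * (mat_adjoint V * B) = B" if "B \<in> carrier_mat k k" for B
  proof -
    have "V * (mat_adjoint V * B) = (V * mat_adjoint V) * B"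
      using that Vc by (simp add: assoc_mult_mat[of V k k "mat_adjoint V" k B k])
    then show ?thesis
      using that unfolding unitary_adjoint_right[OF V] by simp
  qed
  have "mat_adjoint (C * V) * (C * V) = D"
    unfolding VXV[symmetric] using C Vc by (simp add: k_simps)
  moreover have "mat_adjoint (mat_adjoint V * mat_conj (C * V)) * (mat_adjoint V * mat_conj (C * V)) = mat_conj D"
    unfolding VXV[symmetric] using C Vc by (simp add: k_simps mat_adjoint_conj VVB)
  moreover have "mat_conj D = D"
    unfolding D_def mat_conj_diag_list_mat by (simp add: comp_def)
  moreover have "(C * V) * (mat_adjoint V * mat_conj (C * V)) = C * mat_conj C * mat_conj V"
    using C Vc by (simp add: k_simps VVB)
  ultimately show ?thesis
    using that[OF V, of "C * V" "mat_adjoint V * mat_conj (C * V)"] C Vc unfolding D_def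
    by (simp add: k_simps)
qed

lemma char_poly_linear_factors_perm:
  assumes "char_poly M = (\<Prod>x\<leftarrow>xs. f x)" "mset ys = mset xs"
  shows "char_poly M = (\<Prod>x\<leftarrow>ys. f x)"
  using assms by (simp flip: prod_mset_prod_list)

text \<open>If \<open>C C\<^sup>c = 0\<close>, the columns of \<open>Z\<close> belonging to nonzero singular values are
  orthogonal, nonzero, and supported on the rows of the zero singular values; so at most
  half of the singular values are nonzero, and each can be paired with a zero.\<close>

lemma pairing_sum_conj_nilpotent:
  assumes C: "C \<in> carrier_mat k k" and CC: "C * mat_conj C = 0\<^sub>m k k"
    and cp: "char_poly (mat_adjoint C * C) = (\<Prod>x\<leftarrow>xs. [:- complex_of_real (x\<^sup>2), 1:])"
  shows "pairing_sum (mset xs) 0"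
proof -
  define ps where "ps = filter (\<lambda>x. x \<noteq> 0) xs"
  define z where "z = length (filter (\<lambda>x. x = 0) xs)"
  define ys where "ys = ps @ replicate z 0"
  define r where "r = length ps"
  define es where "es = map (\<lambda>y. complex_of_real (y\<^sup>2)) ys"
  have "mset as = mset (filter (\<lambda>x. x \<noteq> 0) as) + replicate_mset (length (filter (\<lambda>x. x = 0) as)) 0"
    for as :: "real list"
    by (induction as) auto
  then have mset_xs: "mset xs = mset ps + replicate_mset z 0"
    unfolding ps_def z_def .
  have "char_poly (mat_adjoint C * C) = (\<Prod>y\<leftarrow>ys. [:- complex_of_real (y\<^sup>2), 1:])"
    using cp by (rule char_poly_linear_factors_perm) (simp add: ys_def mset_xs)
  then obtain V W Z where V: "unitary k V" and W: "W \<in> carrier_mat k k" and Z: "Z \<in> carrier_mat k k"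
    and WW: "mat_adjoint W * W = diag_list_mat es" and ZZ: "mat_adjoint Z * Z = diag_list_mat es"
    and WZ: "W * Z = C * mat_conj C * mat_conj V"
    unfolding es_def using conj_product_frame[OF C] by metis
  have len: "length es = k"
    using WW W by (metis carrier_matD dim_diag_list_mat(1) mat_adjoint_carrier mult_carrier_mat)
  then have k: "k = r + z"
    unfolding es_def ys_def r_def by simp
  have es_nonzero: "es ! i \<noteq> 0" if "i < r" for i
    using that nth_mem[of i ps] unfolding es_def ys_def r_def ps_def by (auto simp: nth_append)
  have "W * Z = 0\<^sub>m k k"
    unfolding WZ CC using unitary_carrier[OF V] by simp
  then have "diag_list_mat es * Z = 0\<^sub>m k k"
    using W Z unfolding WW[symmetric] by (simp add: assoc_mult_mat[of _ k k _ k _ k])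
  then have Z_row: "Z $$ (i, j) = 0" if "i < r" "j < k" for i j
    using arg_cong[of _ _ "\<lambda>M. M $$ (i, j)"] index_diag_list_mat_mult_left[OF Z len, of i j]
      es_nonzero[of i] that k by auto
  define Y where "Y = mat z r (\<lambda>(i, j). Z $$ (r + i, j))"
  have "mat_adjoint Y * Y = diag_list_mat (take r es)"
  proof (rule eq_matI)
    fix i j assume "i < dim_row (diag_list_mat (take r es))" "j < dim_col (diag_list_mat (take r es))"
    then have i: "i < r" and j: "j < r"
      using len k by auto
    have "(mat_adjoint Y * Y) $$ (i, j) = (\<Sum>l<z. cnj (Z $$ (r + l, i)) * Z $$ (r + l, j))"
      using i j unfolding Y_def by (simp add: mult_mat_simps)
    also have "\<dots> = (\<Sum>l<k. cnj (Z $$ (l, i)) * Z $$ (l, j))"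
      unfolding k sum_lessThan_add_split using Z_row i j k by simp
    also have "\<dots> = diag_list_mat (take r es) $$ (i, j)"
      using arg_cong[OF ZZ, of "\<lambda>M. M $$ (i, j)"] Z i j k len by (simp add: mult_mat_simps)
    finally show "(mat_adjoint Y * Y) $$ (i, j) = diag_list_mat (take r es) $$ (i, j)" .
  qed (use len k in \<open>auto simp: Y_def\<close>)
  moreover have "0 \<notin> set (take r es)"
    using es_nonzero len k by (auto simp: in_set_conv_nth)
  ultimately have "r \<le> z"
    using orthogonal_nonzero_cols_le_rows[of Y z r] len k unfolding Y_def by auto
  then show ?thesis
    unfolding mset_xs r_def by (rule pairing_sum_with_zeros)
qed

lemma similar_diag_list_mat_scaled_inverse:
  assumes Z: "Z \<in> carrier_mat k k" and len: "length es = k" and nonzero: "0 \<notin> set es"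
    and gram: "mat_adjoint Z * Z = diag_list_mat es"
    and scaled: "mat_adjoint Z * diag_list_mat es * Z = c \<cdot>\<^sub>m 1\<^sub>m k"
  shows "similar_mat (diag_list_mat es) (diag_list_mat (map (\<lambda>e. c / e) es))"
proof -
  note k_simps = mult_carrier_mat[of _ k k _ k] assoc_mult_mat[of _ k k _ k _ k]
  define D where "D = diag_list_mat es"
  define Dinv where "Dinv = diag_list_mat (map (\<lambda>e. 1 / e) es)"
  have D: "D \<in> carrier_mat k k" and Dinv: "Dinv \<in> carrier_mat k k"
    unfolding D_def Dinv_def using len by (metis diag_list_mat_carrier length_map)+
  have DinvD: "Dinv * D = 1\<^sub>m k"
    unfolding Dinv_def D_def using len nonzero
    by (subst diag_list_mat_mult) (auto intro!: eq_matI simp: in_set_conv_nth)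
  define Zi where "Zi = Dinv * mat_adjoint Z"
  have Zi: "Zi \<in> carrier_mat k k"
    unfolding Zi_def using Dinv Z by simp
  have ZiZ: "Zi * Z = 1\<^sub>m k"
    unfolding Zi_def using Dinv Z by (simp add: k_simps gram[folded D_def] DinvD)
  have ZZi: "Z * Zi = 1\<^sub>m k"
    by (rule mat_mult_left_right_inverse[OF Zi Z ZiZ])
  have "Zi * D * Z = Dinv * (c \<cdot>\<^sub>m 1\<^sub>m k)"
    unfolding Zi_def scaled[folded D_def, symmetric] using Dinv D Z by (simp add: k_simps)
  also have "\<dots> = c \<cdot>\<^sub>m Dinv"
    using Dinv by (simp add: mult_smult_distrib[of _ k k _ k])
  also have "\<dots> = diag_list_mat (map (\<lambda>e. c / e) es)"
    unfolding Dinv_def by (rule eq_matI) auto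
  finally have ZiDZ: "Zi * D * Z = diag_list_mat (map (\<lambda>e. c / e) es)" .
  have "Z * (Zi * D * Z) * Zi = (Z * Zi) * D * (Z * Zi)"
    using D Z Zi by (simp add: k_simps)
  then have "D = Z * (Zi * D * Z) * Zi"
    unfolding ZZi using D by simp
  then show ?thesis
    unfolding similar_mat_def similar_mat_wit_def ZiDZ D_def[symmetric] Let_def
    using D Z Zi ZiZ ZZi len by (intro exI[of _ Z] exI[of _ Zi]) auto
qed

text \<open>If \<open>C C\<^sup>c = \<lambda> I\<close> with \<open>\<lambda> \<noteq> 0\<close>, then \<open>C\<^sup>c = \<lambda> C\<^sup>-\<^sup>1\<close> has the singular values of \<open>C\<close>,
  which are therefore invariant under \<open>s \<mapsto> |\<lambda>| / s\<close>; and \<open>|det C|\<^sup>2 = \<lambda>\<^sup>k\<close> forces \<open>k\<close>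
  even when \<open>\<lambda> < 0\<close>.\<close>

lemma pairing_sum_conj_scalar_nonzero:
  assumes C: "C \<in> carrier_mat k k" and CC: "C * mat_conj C = complex_of_real l \<cdot>\<^sub>m 1\<^sub>m k"
    and l: "l \<noteq> 0" and nonneg: "\<forall>x\<in>set xs. 0 \<le> x"
    and cp: "char_poly (mat_adjoint C * C) = (\<Prod>x\<leftarrow>xs. [:- complex_of_real (x\<^sup>2), 1:])"
  shows "pairing_sum (mset xs) (l * k)"
proof -
  note k_simps = mult_carrier_mat[of _ k k _ k] assoc_mult_mat[of _ k k _ k _ k]
    mat_adjoint_mult[of _ k k _ k]
  define es where "es = map (\<lambda>y. complex_of_real (y\<^sup>2)) xs"
  have "complex_of_real ((cmod (det C))\<^sup>2) = det C * cnj (det C)"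
    by (rule complex_norm_square)
  also have "\<dots> = det (C * mat_conj C)"
    using C by (simp add: det_mult[of _ k] det_mat_conj)
  also have "\<dots> = complex_of_real (l ^ k)"
    unfolding CC by simp
  finally have "(cmod (det C))\<^sup>2 = l ^ k"
    by (simp only: of_real_eq_iff)
  then have even: "l < 0 \<Longrightarrow> even k"
    by (metis power_less_zero_eq zero_le_power2 not_less)
  obtain V W Z where V: "unitary k V" and W: "W \<in> carrier_mat k k" and Z: "Z \<in> carrier_mat k k"
    and WW: "mat_adjoint W * W = diag_list_mat es" and ZZ: "mat_adjoint Z * Z = diag_list_mat es"
    and WZ: "W * Z = C * mat_conj C * mat_conj V"
    unfolding es_def using conj_product_frame[OF C cp] by metis
  have Vc: "V \<in> carrier_mat k k"
    using unitary_carrier[OF V] .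
  have len: "length es = k"
    using WW W by (metis carrier_matD dim_diag_list_mat(1) mat_adjoint_carrier mult_carrier_mat)
  have WZ': "W * Z = complex_of_real l \<cdot>\<^sub>m mat_conj V"
    unfolding WZ CC using Vc by (simp add: mult_smult_assoc_mat[of _ k k _ k])
  have "det (mat_conj V) \<noteq> 0"
    using arg_cong[OF unitary_adjoint_left[OF unitary_mat_conj[OF V]], of det] Vc
    by (auto simp: det_mult[of _ k])
  then have "det W \<noteq> 0"
    using arg_cong[OF WZ', of det] W Z Vc l by (auto simp: det_mult[of _ k])
  moreover have "cnj (det W) * det W = prod_list es"
    using arg_cong[OF WW, of det] W by (simp add: det_mult[of _ k] det_mat_adjoint det_diag_list_mat)
  ultimately have es_nonzero: "0 \<notin> set es"
    by (metis complex_cnj_zero_iff mult_eq_0_iff prod_list_zero_iff)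
  then have pos: "\<forall>x\<in>#mset xs. x > 0"
    using nonneg unfolding es_def by force
  have "mat_adjoint Z * diag_list_mat es * Z = mat_adjoint (W * Z) * (W * Z)"
    unfolding WW[symmetric] using W Z by (simp add: k_simps)
  also have "\<dots> = complex_of_real l \<cdot>\<^sub>m (complex_of_real l \<cdot>\<^sub>m (mat_adjoint (mat_conj V) * mat_conj V))"
    unfolding WZ' mat_adjoint_smult using Vc
    by (simp add: mult_smult_assoc_mat[of _ k k _ k] mult_smult_distrib[of _ k k _ k])
  also have "\<dots> = complex_of_real (l\<^sup>2) \<cdot>\<^sub>m 1\<^sub>m k"
    unfolding unitary_adjoint_left[OF unitary_mat_conj[OF V]]
    by (rule eq_matI) (auto simp: power2_eq_square)
  finally have "similar_mat (diag_list_mat es) (diag_list_mat (map (\<lambda>e. complex_of_real (l\<^sup>2) / e) es))"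
    by (rule similar_diag_list_mat_scaled_inverse[OF Z len es_nonzero ZZ])
  from char_poly_similar[OF this]
  have "image_mset (\<lambda>y. complex_of_real (y\<^sup>2)) (mset xs) = image_mset (\<lambda>y. complex_of_real (l\<^sup>2 / y\<^sup>2)) (mset xs)"
    unfolding char_poly_diag_list_mat es_def
    by (intro linear_factors_mset_inj) (simp flip: prod_mset_prod_list add: comp_def multiset.map_comp)
  then have "image_mset (\<lambda>c. sqrt (Re c)) (image_mset (\<lambda>y. complex_of_real (y\<^sup>2)) (mset xs))
    = image_mset (\<lambda>c. sqrt (Re c)) (image_mset (\<lambda>y. complex_of_real (l\<^sup>2 / y\<^sup>2)) (mset xs))"
    by simp
  moreover have "image_mset (\<lambda>c. sqrt (Re c)) (image_mset (\<lambda>y. complex_of_real (y\<^sup>2)) (mset xs)) = mset xs"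
    using pos by (simp add: multiset.map_comp comp_def, induction xs) auto
  moreover have "image_mset (\<lambda>c. sqrt (Re c)) (image_mset (\<lambda>y. complex_of_real (l\<^sup>2 / y\<^sup>2)) (mset xs))
    = image_mset (\<lambda>y. \<bar>l\<bar> / y) (mset xs)"
    using pos by (force simp: multiset.map_comp comp_def real_sqrt_divide intro!: image_mset_cong)
  ultimately have "image_mset (\<lambda>y. \<bar>l\<bar> / y) (mset xs) = mset xs"
    by simp
  moreover have "size (mset xs) = k"
    using len unfolding es_def by simp
  ultimately show ?thesis
    using pairing_sum_reciprocal[OF pos _ l] even by auto
qed

lemma pairing_sum_conj_scalar:
  assumes C: "C \<in> carrier_mat k k" and CC: "C * mat_conj C = complex_of_real l \<cdot>\<^sub>m 1\<^sub>m k"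
    and nonneg: "\<forall>x\<in>set xs. 0 \<le> x"
    and cp: "char_poly (mat_adjoint C * C) = (\<Prod>x\<leftarrow>xs. [:- complex_of_real (x\<^sup>2), 1:])"
  shows "pairing_sum (mset xs) (l * k)"
proof (cases "l = 0")
  case True
  then have "C * mat_conj C = 0\<^sub>m k k"
    unfolding CC by (intro eq_matI) auto
  then show ?thesis
    using pairing_sum_conj_nilpotent[OF C _ cp] True by simp
next
  case False
  then show ?thesis
    using pairing_sum_conj_scalar_nonzero[OF C CC _ nonneg cp] by simp
qed

subsection \<open>Reduction to blocks\<close>

text \<open>Conjugating \<open>A\<close> to \<open>B = U\<^sup>* A U\<^sup>c\<close> with \<open>U\<close> unitary replaces \<open>A A\<^sup>c\<close> by
  \<open>U\<^sup>* (A A\<^sup>c) U\<close> and keeps the singular values.\<close>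

lemma unitary_conj_reduction:
  assumes A: "A \<in> carrier_mat n n" and herm: "hermitian_mat (A * mat_conj A)"
    and cp: "char_poly (A * mat_conj A) = (\<Prod>e\<leftarrow>es. [:-e, 1:])"
  obtains B where "B \<in> carrier_mat n n" "B * mat_conj B = diag_list_mat es" "map cnj es = es"
    "char_poly (mat_adjoint B * B) = char_poly (mat_adjoint A * A)"
    "mat_trace (A * mat_conj A) = sum_list es"
proof -
  note n_simps = mult_carrier_mat[of _ n n _ n] assoc_mult_mat[of _ n n _ n _ n]
    mat_adjoint_mult[of _ n n _ n] mat_conj_mult[of _ n n _ n]
  define M where "M = A * mat_conj A"
  have M: "M \<in> carrier_mat n n" "mat_adjoint M = M"
    using A herm unfolding M_def hermitian_mat_def by auto
  obtain U where U: "unitary n U" and UMU: "mat_adjoint U * M * U = diag_list_mat es"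
    using hermitian_unitary_diagonalization[OF M cp[folded M_def]] by blast
  have Uc: "U \<in> carrier_mat n n"
    using unitary_carrier[OF U] .
  have UUB: "U * (mat_adjoint U * X) = X" if "X \<in> carrier_mat n n" for X
  proof -
    have "U * (mat_adjoint U * X) = (U * mat_adjoint U) * X"
      using that Uc by (simp add: n_simps)
    then show ?thesis
      using that unfolding unitary_adjoint_right[OF U] by simp
  qed
  have cUUB: "mat_conj U * (mat_conj (mat_adjoint U) * X) = X" if "X \<in> carrier_mat n n" for X
  proof -
    have "mat_conj U * (mat_conj (mat_adjoint U) * X) = mat_conj (U * mat_adjoint U) * X"
      using that Uc by (simp add: n_simps)
    then show ?thesis
      using that unfolding unitary_adjoint_right[OF U] by simp
  qed
  define B where "B = mat_adjoint U * A * mat_conj U"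
  have B: "B \<in> carrier_mat n n"
    unfolding B_def using Uc A by (simp add: n_simps)
  have "B * mat_conj B = diag_list_mat es"
    unfolding B_def UMU[symmetric] M_def using Uc A by (simp add: n_simps cUUB)
  moreover have "map cnj es = es"
  proof -
    have "diag_list_mat (map cnj es) = diag_list_mat es"
      unfolding mat_adjoint_diag_list_mat[symmetric] UMU[symmetric] using Uc M by (simp add: n_simps)
    then show ?thesis
      by (metis dim_diag_list_mat(1) index_diag_list_mat length_map nth_equalityI nth_map)
  qed
  moreover have "mat_adjoint B * B = mat_adjoint (mat_conj U) * (mat_adjoint A * A) * mat_conj U"
    unfolding B_def using Uc A by (simp add: n_simps mat_adjoint_conj UUB)
  then have "char_poly (mat_adjoint B * B) = char_poly (mat_adjoint A * A)"
    using A by (simp add: char_poly_similar unitary_similar[OF unitary_mat_conj[OF U]] n_simps)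
  moreover have "mat_trace (A * mat_conj A) = sum_list es"
  proof -
    have "sum_list es = mat_trace ((mat_adjoint U * M) * U)"
      unfolding UMU mat_trace_diag_list_mat ..
    also have "\<dots> = mat_trace (U * (mat_adjoint U * M))"
      by (rule mat_trace_mult_comm) (use Uc M in auto)
    finally show ?thesis
      using UUB[OF M(1)] unfolding M_def by simp
  qed
  ultimately show ?thesis
    using that B by blast
qed

lemma block_diag_if_commutes_with_diag:
  assumes B: "B \<in> carrier_mat (k + m) (k + m)" and len: "length es = m" and e: "e \<notin> set es"
    and comm: "diag_list_mat (replicate k e @ es) * B = B * diag_list_mat (replicate k e @ es)"
  obtains B1 B2 where "B1 \<in> carrier_mat k k" "B2 \<in> carrier_mat m m"
    "B = four_block_mat B1 (0\<^sub>m k m) (0\<^sub>m m k) B2"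
proof -
  define n where "n = k + m"
  define ds where "ds = replicate k e @ es"
  have lends: "length ds = n"
    using len unfolding ds_def n_def by simp
  have ds: "ds ! i = e \<longleftrightarrow> i < k" if "i < n" for i
    using that e len unfolding ds_def n_def by (auto simp: nth_append)
  have entry: "ds ! i * B $$ (i, j) = B $$ (i, j) * ds ! j" if "i < n" "j < n" for i j
    using arg_cong[OF comm, of "\<lambda>M. M $$ (i, j)"] that B[folded n_def] lends
      index_diag_list_mat_mult_left index_diag_list_mat_mult_right unfolding ds_def by metis
  have off_diag: "B $$ (i, j) = 0" if "i < n" "j < n" "i < k \<longleftrightarrow> \<not> j < k" for i j
    using entry[OF that(1,2)] ds[OF that(1)] ds[OF that(2)] that(3) by (auto simp: mult.commute)
  define B1 where "B1 = mat k k (\<lambda>(i, j). B $$ (i, j))"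
  define B2 where "B2 = mat m m (\<lambda>(i, j). B $$ (k + i, k + j))"
  have "B = four_block_mat B1 (0\<^sub>m k m) (0\<^sub>m m k) B2"
    by (rule eq_matI) (use B off_diag in \<open>auto simp: B1_def B2_def n_def\<close>)
  moreover have "B1 \<in> carrier_mat k k" "B2 \<in> carrier_mat m m"
    unfolding B1_def B2_def by auto
  ultimately show ?thesis
    using that by blast
qed

lemma singular_values_four_block_diag:
  assumes B1: "B1 \<in> carrier_mat k k" and B2: "B2 \<in> carrier_mat m m"
    and cp: "char_poly (mat_adjoint (four_block_mat B1 (0\<^sub>m k m) (0\<^sub>m m k) B2) * four_block_mat B1 (0\<^sub>m k m) (0\<^sub>m m k) B2)
      = (\<Prod>x\<leftarrow>xs. [:- complex_of_real (x\<^sup>2), 1:])"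
  obtains xs1 xs2 where "mset xs = mset xs1 + mset xs2"
    "char_poly (mat_adjoint B1 * B1) = (\<Prod>x\<leftarrow>xs1. [:- complex_of_real (x\<^sup>2), 1:])"
    "char_poly (mat_adjoint B2 * B2) = (\<Prod>x\<leftarrow>xs2. [:- complex_of_real (x\<^sup>2), 1:])"
proof -
  define sq where "sq = (\<lambda>x :: real. complex_of_real (x\<^sup>2))"
  obtain as1 where as1: "char_poly (mat_adjoint B1 * B1) = (\<Prod>a\<leftarrow>as1. [:-a, 1:])"
    using char_poly_factorized[of "mat_adjoint B1 * B1" k] B1 by (auto simp: mult_carrier_mat[of _ k k _ k])
  obtain as2 where as2: "char_poly (mat_adjoint B2 * B2) = (\<Prod>a\<leftarrow>as2. [:-a, 1:])"
    using char_poly_factorized[of "mat_adjoint B2 * B2" m] B2 by (auto simp: mult_carrier_mat[of _ m m _ m])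
  have "mat_adjoint (four_block_mat B1 (0\<^sub>m k m) (0\<^sub>m m k) B2) * four_block_mat B1 (0\<^sub>m k m) (0\<^sub>m m k) B2
    = four_block_mat (mat_adjoint B1 * B1) (0\<^sub>m k m) (0\<^sub>m m k) (mat_adjoint B2 * B2)"
    using B1 B2 by (simp add: mat_adjoint_four_block_diag mult_four_block_diag)
  then have "char_poly (mat_adjoint (four_block_mat B1 (0\<^sub>m k m) (0\<^sub>m m k) B2) * four_block_mat B1 (0\<^sub>m k m) (0\<^sub>m m k) B2)
    = char_poly (mat_adjoint B1 * B1) * char_poly (mat_adjoint B2 * B2)"
    by (rule char_poly_0_block) (use as1 as2 B1 B2 in auto)
  then have "(\<Prod>e\<in>#image_mset sq (mset xs). [:-e, 1:]) = (\<Prod>e\<in>#mset as1 + mset as2. [:-e, 1:])"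
    unfolding cp as1 as2 sq_def by (simp flip: prod_mset_prod_list add: multiset.map_comp comp_def)
  then have "image_mset sq (mset xs) = mset as1 + mset as2"
    by (rule linear_factors_mset_inj)
  then obtain X1 X2 where X: "mset xs = X1 + X2" "mset as1 = image_mset sq X1" "mset as2 = image_mset sq X2"
    using image_mset_eq_plusD by blast
  obtain xs1 xs2 where "X1 = mset xs1" "X2 = mset xs2"
    using ex_mset by metis
  then show ?thesis
    using that X as1 as2 unfolding sq_def
    by (simp flip: prod_mset_prod_list add: multiset.map_comp comp_def)
qed
lemma char_poly_group_eigenvalue:
  assumes M: "(M :: complex mat) \<in> carrier_mat n n" and n: "n \<noteq> 0"
  obtains k e es where "0 < k" "n = k + length es" "e \<notin> set es"
    "char_poly M = (\<Prod>e\<leftarrow>replicate k e @ es. [:-e, 1:])"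
proof -
  obtain es0 where es0: "char_poly M = (\<Prod>e\<leftarrow>es0. [:-e, 1:])" "length es0 = n"
    using char_poly_factorized[OF M] by blast
  define e where "e = hd es0"
  define k where "k = length (filter (\<lambda>x. x = e) es0)"
  define es where "es = filter (\<lambda>x. x \<noteq> e) es0"
  have "mset as = replicate_mset (length (filter (\<lambda>x. x = e) as)) e + mset (filter (\<lambda>x. x \<noteq> e) as)"
    for as :: "complex list"
    by (induction as) auto
  then have mset_es0: "mset es0 = mset (replicate k e @ es)"
    unfolding k_def es_def by simp
  then have "n = k + length es"
    using es0(2) by (metis length_append length_replicate size_mset)
  moreover have "e \<in> set es0"
    using es0(2) n unfolding e_def by (cases es0) auto
  then have "0 < k"
    unfolding k_def by (simp add: filter_empty_conv length_greater_0_conv)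
  moreover have "e \<notin> set es"
    unfolding es_def by simp
  moreover have "char_poly M = (\<Prod>e\<leftarrow>replicate k e @ es. [:-e, 1:])"
    using es0(1) mset_es0[symmetric] by (rule char_poly_linear_factors_perm)
  ultimately show ?thesis
    using that by blast
qed

text \<open>\<open>B\<^sup>c B\<close> is the conjugate of \<open>B B\<^sup>c\<close>, so with \<open>B B\<^sup>c = D\<close> real diagonal both products equal
  \<open>D\<close> and \<open>D B = B B\<^sup>c B = B D\<close>.\<close>

lemma conj_product_block_split:
  assumes B: "B \<in> carrier_mat (k + m) (k + m)" and BB: "B * mat_conj B = diag_list_mat (replicate k e @ es)"
    and real: "map cnj (replicate k e @ es) = replicate k e @ es" and len: "length es = m"
    and e: "e \<notin> set es" and k: "0 < k"
  obtains l B1 B2 where "B1 \<in> carrier_mat k k" "B2 \<in> carrier_mat m m"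
    "B = four_block_mat B1 (0\<^sub>m k m) (0\<^sub>m m k) B2" "e = complex_of_real l"
    "B1 * mat_conj B1 = complex_of_real l \<cdot>\<^sub>m 1\<^sub>m k" "B2 * mat_conj B2 = diag_list_mat es"
proof -
  define D where "D = diag_list_mat (replicate k e @ es)"
  have "mat_conj B * B = mat_conj D"
    unfolding D_def BB[symmetric] using B by (simp add: mat_conj_mult[of _ "k + m" "k + m" _ "k + m"])
  also have "mat_conj D = D"
    unfolding D_def mat_conj_diag_list_mat real ..
  finally have "D * B = B * D"
    unfolding D_def BB[symmetric] using B
    by (simp add: assoc_mult_mat[of _ "k + m" "k + m" _ "k + m" _ "k + m"])
  then obtain B1 B2 where B1: "B1 \<in> carrier_mat k k" and B2: "B2 \<in> carrier_mat m m"
    and B12: "B = four_block_mat B1 (0\<^sub>m k m) (0\<^sub>m m k) B2"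
    using block_diag_if_commutes_with_diag[OF B len e] unfolding D_def by metis
  have "cnj e = e"
    using real k by (cases k) auto
  then obtain l where l: "e = complex_of_real l"
    by (metis Reals_cnj_iff Reals_cases)
  have blocks: "four_block_mat (B1 * mat_conj B1) (0\<^sub>m k m) (0\<^sub>m m k) (B2 * mat_conj B2)
    = four_block_mat (complex_of_real l \<cdot>\<^sub>m 1\<^sub>m k) (0\<^sub>m k m) (0\<^sub>m m k) (diag_list_mat es)"
    using BB B1 B2 len unfolding B12 diag_list_mat_append l
    by (simp add: mat_conj_four_block_diag mult_four_block_diag diag_list_mat_replicate)
  have "diag_list_mat es \<in> carrier_mat m m"
    using diag_list_mat_carrier[of es] unfolding len .
  moreover have "B1 * mat_conj B1 \<in> carrier_mat k k" "B2 * mat_conj B2 \<in> carrier_mat m m"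
    using B1 B2 by (simp_all add: mult_carrier_mat[of _ k k _ k] mult_carrier_mat[of _ m m _ m])
  ultimately show ?thesis
    using that[OF B1 B2 B12 l] four_block_diag_eqD[OF _ _ _ _ blocks] by auto
qed

theorem pairing_sum_trace_conj_product:
  assumes "A \<in> carrier_mat n n" "hermitian_mat (A * mat_conj A)" "\<forall>x\<in>set xs. 0 \<le> x"
    "char_poly (mat_adjoint A * A) = (\<Prod>x\<leftarrow>xs. [:- complex_of_real (x\<^sup>2), 1:])"
  shows "\<exists>v. pairing_sum (mset xs) v \<and> mat_trace (A * mat_conj A) = complex_of_real v"
  using assms
proof (induction n arbitrary: A xs rule: less_induct)
  case (less n A xs)
  have A: "A \<in> carrier_mat n n" and nonneg: "\<forall>x\<in>set xs. 0 \<le> x"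
    and cp: "char_poly (mat_adjoint A * A) = (\<Prod>x\<leftarrow>xs. [:- complex_of_real (x\<^sup>2), 1:])"
    using less.prems by auto
  have len: "length xs = n"
    using A cp by (intro length_eq_dim_if_char_poly_linear_factors[of "mat_adjoint A * A"])
      (auto simp: mult_carrier_mat[of _ n n _ n])
  show ?case
  proof (cases "n = 0")
    case True
    then show ?thesis
      using A len pairing_sum_empty by (auto simp: mat_trace_def)
  next
    case False
    obtain k e es where k: "0 < k" and n: "n = k + length es" and e_es: "e \<notin> set es"
      and cpM: "char_poly (A * mat_conj A) = (\<Prod>e\<leftarrow>replicate k e @ es. [:-e, 1:])"
      using char_poly_group_eigenvalue[OF _ False, of "A * mat_conj A"] A
      by (metis mult_carrier_mat mat_conj_carrier)
    define m where "m = length es"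
    obtain B where B: "B \<in> carrier_mat (k + m) (k + m)"
      and BB: "B * mat_conj B = diag_list_mat (replicate k e @ es)"
      and real: "map cnj (replicate k e @ es) = replicate k e @ es"
      and cpB: "char_poly (mat_adjoint B * B) = char_poly (mat_adjoint A * A)"
      and tr: "mat_trace (A * mat_conj A) = sum_list (replicate k e @ es)"
      using unitary_conj_reduction[OF A less.prems(2) cpM] n unfolding m_def by metis
    obtain l B1 B2 where B1: "B1 \<in> carrier_mat k k" and B2: "B2 \<in> carrier_mat m m"
      and B12: "B = four_block_mat B1 (0\<^sub>m k m) (0\<^sub>m m k) B2" and l: "e = complex_of_real l"
      and BB1: "B1 * mat_conj B1 = complex_of_real l \<cdot>\<^sub>m 1\<^sub>m k"
      and BB2: "B2 * mat_conj B2 = diag_list_mat es"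
      using conj_product_block_split[OF B BB real m_def[symmetric] e_es k] by metis
    obtain xs1 xs2 where xs: "mset xs = mset xs1 + mset xs2"
      and cp1: "char_poly (mat_adjoint B1 * B1) = (\<Prod>x\<leftarrow>xs1. [:- complex_of_real (x\<^sup>2), 1:])"
      and cp2: "char_poly (mat_adjoint B2 * B2) = (\<Prod>x\<leftarrow>xs2. [:- complex_of_real (x\<^sup>2), 1:])"
      using singular_values_four_block_diag[OF B1 B2] cpB cp unfolding B12 by metis
    have nonneg1: "\<forall>x\<in>set xs1. 0 \<le> x" and nonneg2: "\<forall>x\<in>set xs2. 0 \<le> x"
      using nonneg xs by (metis set_mset_mset set_mset_union UnI1 UnI2)+
    have "hermitian_mat (B2 * mat_conj B2)"
      using real unfolding hermitian_mat_def BB2 mat_adjoint_diag_list_mat by simp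
    then obtain v2 where v2: "pairing_sum (mset xs2) v2" "mat_trace (B2 * mat_conj B2) = complex_of_real v2"
      using less.IH[OF _ B2 _ nonneg2 cp2] n k unfolding m_def by auto
    have "pairing_sum (mset xs) (l * k + v2)"
      unfolding xs by (rule pairing_sum_add[OF pairing_sum_conj_scalar[OF B1 BB1 nonneg1 cp1] v2(1)])
    moreover have "mat_trace (A * mat_conj A) = complex_of_real (l * k + v2)"
      using v2(2) unfolding tr BB2 mat_trace_diag_list_mat l by (simp add: sum_list_replicate)
    ultimately show ?thesis
      by blast
  qed
qed

subsection \<open>Realising a pairing\<close>

definition pair_swap :: "nat \<Rightarrow> nat \<Rightarrow> nat" where
  "pair_swap r i = (if i < r then if even i then i + 1 else i - 1 else i)"

definition pair_sign :: "nat \<Rightarrow> (nat \<Rightarrow> nat) \<Rightarrow> nat \<Rightarrow> real" where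
  "pair_sign r \<rho> i = (if i < r \<and> odd i then (-1) ^ \<rho> (i div 2) else 1)"

text \<open>Row \<open>i\<close> has its single nonzero entry \<open>\<plusminus>w j\<close> in column \<open>j = pair_swap r i\<close>; so the
  columns are orthogonal with norms \<open>w j\<close>, and \<open>A A\<^sup>c\<close> has the diagonal entries
  \<open>(-1)\<^bsup>\<rho> i\<^esup> w(2i) w(2i+1)\<close> in rows \<open>2i\<close> and \<open>2i+1\<close> for \<open>2i < r\<close>, and \<open>w(i)\<^sup>2\<close>
  in rows \<open>i \<ge> r\<close>.\<close>

definition signed_pair_swap_mat :: "nat \<Rightarrow> nat \<Rightarrow> (nat \<Rightarrow> nat) \<Rightarrow> (nat \<Rightarrow> real) \<Rightarrow> complex mat" where
  "signed_pair_swap_mat d r \<rho> w =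
     mat d d (\<lambda>(i, j). if j = pair_swap r i then complex_of_real (pair_sign r \<rho> i * w j) else 0)"

lemma pair_swap_pair_swap:
  assumes "even r"
  shows "pair_swap r (pair_swap r i) = i"
  using assms unfolding pair_swap_def by (cases "even i") (auto, presburger+)

lemma pair_swap_less:
  assumes "even r" "r \<le> d" "i < d"
  shows "pair_swap r i < d"
  using assms unfolding pair_swap_def by (cases "even i") (auto, presburger)

lemma pair_sign_square: "pair_sign r \<rho> i * pair_sign r \<rho> i = 1"
  unfolding pair_sign_def by (simp add: power_mult_distrib[symmetric])

lemma index_signed_pair_swap_mat:
  assumes "even r" "i < d" "j < d"
  shows "signed_pair_swap_mat d r \<rho> w $$ (i, j)
    = (if i = pair_swap r j then complex_of_real (pair_sign r \<rho> i * w j) else 0)"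
  using assms pair_swap_pair_swap[OF assms(1)] unfolding signed_pair_swap_mat_def by auto

lemma adjoint_mult_signed_pair_swap_mat:
  assumes r: "even r" "r \<le> d"
  shows "mat_adjoint (signed_pair_swap_mat d r \<rho> w) * signed_pair_swap_mat d r \<rho> w
    = diag_list_mat (map (\<lambda>j. complex_of_real ((w j)\<^sup>2)) [0..<d])"
proof (rule eq_matI)
  let ?A = "signed_pair_swap_mat d r \<rho> w"
  fix j l assume "j < dim_row (diag_list_mat (map (\<lambda>j. complex_of_real ((w j)\<^sup>2)) [0..<d]))"
    "l < dim_col (diag_list_mat (map (\<lambda>j. complex_of_real ((w j)\<^sup>2)) [0..<d]))"
  then have j: "j < d" and l: "l < d"
    by auto
  note index = index_signed_pair_swap_mat[OF r(1)]
  have swap_inj: "pair_swap r j = pair_swap r l \<longleftrightarrow> j = l"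
    using pair_swap_pair_swap[OF r(1)] by metis
  have "(mat_adjoint ?A * ?A) $$ (j, l) = (\<Sum>i<d. cnj (?A $$ (i, j)) * ?A $$ (i, l))"
    using j l by (simp add: mult_mat_simps signed_pair_swap_mat_def)
  also have "\<dots> = cnj (?A $$ (pair_swap r j, j)) * ?A $$ (pair_swap r j, l)"
    by (rule sum_eq_single) (use j l index pair_swap_less[OF r] in auto)
  also have "\<dots> = (if j = l then complex_of_real ((w j)\<^sup>2) else 0)"
    using swap_inj index[OF pair_swap_less[OF r j] j] index[OF pair_swap_less[OF r j] l] pair_swap_pair_swap[OF r(1)]
      pair_sign_square[of r \<rho> "pair_swap r j"]
    by (auto simp: power2_eq_square algebra_simps simp flip: of_real_mult)
  finally show "(mat_adjoint ?A * ?A) $$ (j, l)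
    = diag_list_mat (map (\<lambda>j. complex_of_real ((w j)\<^sup>2)) [0..<d]) $$ (j, l)"
    using j l by simp
qed (auto simp: signed_pair_swap_mat_def)

lemma trace_signed_pair_swap_mat:
  assumes r: "even r" "r \<le> d"
  shows "mat_trace (signed_pair_swap_mat d r \<rho> w * mat_conj (signed_pair_swap_mat d r \<rho> w))
    = complex_of_real (2 * (\<Sum>i<r div 2. (-1) ^ \<rho> i * w (2 * i) * w (2 * i + 1)) + (\<Sum>i\<in>{r..<d}. (w i)\<^sup>2))"
proof -
  let ?A = "signed_pair_swap_mat d r \<rho> w"
  define g where "g i = pair_sign r \<rho> i * pair_sign r \<rho> (pair_swap r i) * w (pair_swap r i) * w i" for i
  note index = index_signed_pair_swap_mat[OF r(1)]
  have diag: "(?A * mat_conj ?A) $$ (i, i) = complex_of_real (g i)" if i: "i < d" for i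
  proof -
    have "(?A * mat_conj ?A) $$ (i, i) = (\<Sum>j<d. ?A $$ (i, j) * cnj (?A $$ (j, i)))"
      using i by (simp add: mult_mat_simps signed_pair_swap_mat_def)
    also have "\<dots> = ?A $$ (i, pair_swap r i) * cnj (?A $$ (pair_swap r i, i))"
      by (rule sum_eq_single) (use i index pair_swap_less[OF r] pair_swap_pair_swap[OF r(1)] in auto)
    also have "\<dots> = complex_of_real (g i)"
      using index[OF i pair_swap_less[OF r i]] index[OF pair_swap_less[OF r i] i] pair_swap_pair_swap[OF r(1)]
      unfolding g_def by (simp flip: of_real_mult)
    finally show ?thesis .
  qed
  have "mat_trace (?A * mat_conj ?A) = complex_of_real (\<Sum>i<d. g i)"
    unfolding mat_trace_def of_real_sum using diag by (simp add: signed_pair_swap_mat_def)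
  also have "(\<Sum>i<d. g i) = (\<Sum>i<r. g i) + (\<Sum>i\<in>{r..<d}. g i)"
    using r by (simp add: atLeast0LessThan[symmetric] sum.atLeastLessThan_concat)
  also have "(\<Sum>i\<in>{r..<d}. g i) = (\<Sum>i\<in>{r..<d}. (w i)\<^sup>2)"
    by (rule sum.cong) (auto simp: g_def pair_swap_def pair_sign_def power2_eq_square)
  also have "(\<Sum>i<r. g i) = (\<Sum>p<r div 2. g (2 * p) + g (2 * p + 1))"
    using sum_lessThan_double[of g "r div 2"] r by simp
  also have "\<dots> = 2 * (\<Sum>p<r div 2. (-1) ^ \<rho> p * w (2 * p) * w (2 * p + 1))"
    unfolding sum_distrib_left
  proof (rule sum.cong)
    fix p assume "p \<in> {..<r div 2}"
    then have "2 * p + 1 < r"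
      using r by auto
    then show "g (2 * p) + g (2 * p + 1) = 2 * ((-1) ^ \<rho> p * w (2 * p) * w (2 * p + 1))"
      unfolding g_def pair_swap_def pair_sign_def by (simp add: algebra_simps)
  qed simp
  finally show ?thesis
    by simp
qed

lemma sv_of_signed_pair_swap_mat:
  assumes \<tau>: "\<tau> permutes {..<d}" and r: "even r" "r \<le> d"
    and nonneg: "\<forall>i<d. 0 \<le> \<sigma> i" and mono: "\<forall>i j. i \<le> j \<longrightarrow> j < d \<longrightarrow> \<sigma> j \<le> \<sigma> i"
  shows "sv_of (signed_pair_swap_mat d r \<rho> (\<sigma> \<circ> \<tau>)) d \<sigma>"
proof -
  have "char_poly (mat_adjoint (signed_pair_swap_mat d r \<rho> (\<sigma> \<circ> \<tau>)) * signed_pair_swap_mat d r \<rho> (\<sigma> \<circ> \<tau>))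
    = (\<Prod>j<d. [:- complex_of_real ((\<sigma> (\<tau> j))\<^sup>2), 1:])"
    unfolding adjoint_mult_signed_pair_swap_mat[OF r] char_poly_diag_list_mat prod_list_map_upt
    by simp
  also have "\<dots> = (\<Prod>i<d. [:- complex_of_real ((\<sigma> i)\<^sup>2), 1:])"
    using prod.permute[OF \<tau>, of "\<lambda>i. [:- complex_of_real ((\<sigma> i)\<^sup>2), 1:]"] by (simp add: comp_def)
  finally show ?thesis
    unfolding sv_of_def using nonneg mono by (simp add: signed_pair_swap_mat_def)
qed

lemma trace_formula_if_sv_of:
  assumes sv: "sv_of A d \<sigma>" and herm: "hermitian_mat (A * mat_conj A)"
  shows "\<exists>\<tau> r \<rho>. \<tau> permutes {..<d} \<and> even r \<and> r \<le> d \<and> (\<forall>i<r div 2. \<rho> i \<in> {0, 1})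
    \<and> mat_trace (A * mat_conj A) = complex_of_real (trace_formula d \<sigma> \<tau> r \<rho>)"
proof -
  have A: "A \<in> carrier_mat d d" and nonneg: "\<forall>x\<in>set (map \<sigma> [0..<d]). 0 \<le> x"
    using sv unfolding sv_of_def by auto
  have "char_poly (mat_adjoint A * A) = (\<Prod>x\<leftarrow>map \<sigma> [0..<d]. [:- complex_of_real (x\<^sup>2), 1:])"
    using sv unfolding sv_of_def prod_list_map_upt by simp
  then obtain v where "pairing_sum (mset (map \<sigma> [0..<d])) v" "mat_trace (A * mat_conj A) = complex_of_real v"
    using pairing_sum_trace_conj_product[OF A herm nonneg] by blast
  then show ?thesis
    using trace_formula_if_pairing_sum by metis
qed

theorem proposition6:
  shows "(\<forall>(A::complex mat) d \<sigma>.
            A \<in> carrier_mat d d \<longrightarrow> sv_of A d \<sigma> \<longrightarrow> hermitian_mat (A * mat_conj A) \<longrightarrow>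
            (\<exists>\<tau> r \<rho>. \<tau> permutes {..<d} \<and> even r \<and> r \<le> d \<and> (\<forall>i<r div 2. \<rho> i \<in> {0, 1}) \<and>
                mat_trace (A * mat_conj A) = complex_of_real (trace_formula d \<sigma> \<tau> r \<rho>)))
       \<and> (\<forall>d \<tau> r \<rho> (\<sigma>::nat \<Rightarrow> real).
            \<tau> permutes {..<d} \<longrightarrow> even r \<longrightarrow> r \<le> d \<longrightarrow> (\<forall>i<r div 2. \<rho> i \<in> {0, 1}) \<longrightarrow>
            (\<forall>i<d. 0 \<le> \<sigma> i) \<longrightarrow> (\<forall>i j. i \<le> j \<longrightarrow> j < d \<longrightarrow> \<sigma> j \<le> \<sigma> i) \<longrightarrow>
            (\<exists>A::complex mat. A \<in> carrier_mat d d \<and> sv_of A d \<sigma> \<and>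
                mat_trace (A * mat_conj A) = complex_of_real (trace_formula d \<sigma> \<tau> r \<rho>)))"
proof (intro conjI allI impI)
  fix A :: "complex mat" and d \<sigma>
  assume "sv_of A d \<sigma>" "hermitian_mat (A * mat_conj A)"
  then show "\<exists>\<tau> r \<rho>. \<tau> permutes {..<d} \<and> even r \<and> r \<le> d \<and> (\<forall>i<r div 2. \<rho> i \<in> {0, 1}) \<and>
      mat_trace (A * mat_conj A) = complex_of_real (trace_formula d \<sigma> \<tau> r \<rho>)"
    by (rule trace_formula_if_sv_of)
next
  fix d \<tau> r \<rho> and \<sigma> :: "nat \<Rightarrow> real"
  assume \<tau>: "\<tau> permutes {..<d}" and r: "even r" "r \<le> d"
    and \<sigma>: "\<forall>i<d. 0 \<le> \<sigma> i" "\<forall>i j. i \<le> j \<longrightarrow> j < d \<longrightarrow> \<sigma> j \<le> \<sigma> i"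
  define A where "A = signed_pair_swap_mat d r \<rho> (\<sigma> \<circ> \<tau>)"
  have "sv_of A d \<sigma>"
    unfolding A_def using sv_of_signed_pair_swap_mat[OF \<tau> r \<sigma>] .
  moreover have "mat_trace (A * mat_conj A) = complex_of_real (trace_formula d \<sigma> \<tau> r \<rho>)"
    unfolding A_def trace_signed_pair_swap_mat[OF r] trace_formula_def by simp
  ultimately show "\<exists>A. A \<in> carrier_mat d d \<and> sv_of A d \<sigma> \<and>
      mat_trace (A * mat_conj A) = complex_of_real (trace_formula d \<sigma> \<tau> r \<rho>)"
    unfolding sv_of_def by blast
qed

end
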